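(* The following are equivalent: (1) $b=0$; (2) either $R$ is Gorenstein (i.e. $r=1$), or $v(R)=\{0,e,2e,\dots,pe\}\cup\{m\in\mathbb Z:m\ge(p+1)e\}$ for some integer $p$; (3) the type sequence of $R$ is $[r,\dots,r]$.
   Context: Let $(R,\mathfrak m)$ be a one-dimensional local Noetherian domain with quotient field $K$, not regular, analytically irreducible (the integral closure $\overline R$ of $R$ in $K$ is a DVR and a finite $R$-module) and residually rational. Let $v$ be the valuation of $\overline R$ normalized so a uniformizer has value 1, $v(R)=\{v(a):a\in R\setminus\{0\}\}$, $c$ the least element of $v(R)$ with $c+\mathbb N\subseteq v(R)$, $\delta=\ell_R(\overline R/R)$, $r=\ell_R((R:_K\mathfrak m)/R)$, $b=(c-\delta)r-\delta$, $e$ the least positive element of $v(R)$, $n=c-\delta$. Write $v(R)=\{s_0=0<s_1<\cdots\}$, $R_i=\{a\in R:v(a)\ge s_i\}$, $r_i=\ell_R((R:_KR_i)/(R:_KR_{i-1}))$; the type sequence is $[r_1,\dots,r_n]$. *)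

theory Defs
  imports Main
begin

(* Everything lives inside a fixed field 'k, which plays the role of the quotient field K.
   Rings and modules are subsets of 'k. *)

definition subring :: "'k::field set \<Rightarrow> bool" where
  "subring R \<longleftrightarrow> 0 \<in> R \<and> 1 \<in> R \<and> (\<forall>x\<in>R. \<forall>y\<in>R. x + y \<in> R \<and> x - y \<in> R \<and> x * y \<in> R)"

(* K = UNIV is the quotient field of R *)
definition quotient_field_of :: "'k::field set \<Rightarrow> bool" where
  "quotient_field_of R \<longleftrightarrow> (\<forall>x. \<exists>a\<in>R. \<exists>b\<in>R. b \<noteq> 0 \<and> x = a / b)"

definition submod :: "'k::field set \<Rightarrow> 'k set \<Rightarrow> bool" where
  "submod R M \<longleftrightarrow> 0 \<in> M \<and> (\<forall>x\<in>M. \<forall>y\<in>M. x + y \<in> M) \<and> (\<forall>a\<in>R. \<forall>x\<in>M. a * x \<in> M)"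

definition ideal_of :: "'k::field set \<Rightarrow> 'k set \<Rightarrow> bool" where
  "ideal_of R I \<longleftrightarrow> submod R I \<and> I \<subseteq> R"

definition prime_ideal_of :: "'k::field set \<Rightarrow> 'k set \<Rightarrow> bool" where
  "prime_ideal_of R P \<longleftrightarrow> ideal_of R P \<and> P \<noteq> R \<and> (\<forall>a\<in>R. \<forall>b\<in>R. a * b \<in> P \<longrightarrow> a \<in> P \<or> b \<in> P)"

(* the set of non-units of R; R is local iff this is an ideal, and then it is the maximal ideal m *)
definition maxideal :: "'k::field set \<Rightarrow> 'k set" where
  "maxideal R = {a \<in> R. a = 0 \<or> inverse a \<notin> R}"

definition local_ring :: "'k::field set \<Rightarrow> bool" where
  "local_ring R \<longleftrightarrow> ideal_of R (maxideal R) \<and> maxideal R \<noteq> R"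

definition noetherian :: "'k::field set \<Rightarrow> bool" where
  "noetherian R \<longleftrightarrow> \<not> (\<exists>C :: nat \<Rightarrow> 'k set. \<forall>i. ideal_of R (C i) \<and> C i \<subset> C (Suc i))"

(* Krull dimension one for a local domain: there is a nonzero prime and every nonzero prime
   ideal is maximal (hence equals the maximal ideal) *)
definition dim_one_local :: "'k::field set \<Rightarrow> bool" where
  "dim_one_local R \<longleftrightarrow> maxideal R \<noteq> {0} \<and>
     (\<forall>P. prime_ideal_of R P \<and> P \<noteq> {0} \<longrightarrow> P = maxideal R)"

(* regular one-dimensional local ring: maximal ideal is principal *)
definition regular_local :: "'k::field set \<Rightarrow> bool" where
  "regular_local R \<longleftrightarrow> (\<exists>t\<in>R. maxideal R = {t * a | a. a \<in> R})"

definition int_closure :: "'k::field set \<Rightarrow> 'k set" where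
  "int_closure R = {x. \<exists>n>0. \<exists>a :: nat \<Rightarrow> 'k. (\<forall>i<n. a i \<in> R) \<and> x ^ n + (\<Sum>i<n. a i * x ^ i) = 0}"

(* normalized discrete valuation of K (values of nonzero elements; a uniformizer has value 1) *)
definition discrete_valuation :: "('k::field \<Rightarrow> int) \<Rightarrow> bool" where
  "discrete_valuation v \<longleftrightarrow>
     (\<forall>x y. x \<noteq> 0 \<longrightarrow> y \<noteq> 0 \<longrightarrow> v (x * y) = v x + v y) \<and>
     (\<forall>x y. x \<noteq> 0 \<longrightarrow> y \<noteq> 0 \<longrightarrow> x + y \<noteq> 0 \<longrightarrow> min (v x) (v y) \<le> v (x + y)) \<and>
     (\<exists>t. t \<noteq> 0 \<and> v t = 1)"

definition val_ring :: "('k::field \<Rightarrow> int) \<Rightarrow> 'k set" where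
  "val_ring v = {x. x = 0 \<or> 0 \<le> v x}"

definition val_maxideal :: "('k::field \<Rightarrow> int) \<Rightarrow> 'k set" where
  "val_maxideal v = {x. x = 0 \<or> 0 < v x}"

definition finite_module :: "'k::field set \<Rightarrow> 'k set \<Rightarrow> bool" where
  "finite_module R M \<longleftrightarrow> (\<exists>F. finite F \<and> M = {\<Sum>x\<in>F. a x * x | a. \<forall>x\<in>F. a x \<in> R})"

(* residually rational: R/m -> Rbar/mbar is onto (it is always injective) *)
definition residually_rational :: "'k::field set \<Rightarrow> ('k \<Rightarrow> int) \<Rightarrow> bool" where
  "residually_rational R v \<longleftrightarrow> (\<forall>x\<in>int_closure R. \<exists>a\<in>R. x - a \<in> val_maxideal v)"

definition colon :: "'k::field set \<Rightarrow> 'k set \<Rightarrow> 'k set" where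
  "colon M N = {x. \<forall>y\<in>N. x * y \<in> M}"

definition mod_length :: "'k::field set \<Rightarrow> 'k set \<Rightarrow> 'k set \<Rightarrow> nat" where
  "mod_length R M N = Sup {k. \<exists>C :: nat \<Rightarrow> 'k set. C 0 = N \<and> C k = M \<and>
      (\<forall>i\<le>k. submod R (C i)) \<and> (\<forall>i<k. C i \<subset> C (Suc i))}"

definition value_semigroup :: "'k::field set \<Rightarrow> ('k \<Rightarrow> int) \<Rightarrow> int set" where
  "value_semigroup R v = {v a | a. a \<in> R \<and> a \<noteq> 0}"

definition conductor_val :: "'k::field set \<Rightarrow> ('k \<Rightarrow> int) \<Rightarrow> int" where
  "conductor_val R v = (LEAST c. c \<in> value_semigroup R v \<and> (\<forall>k::nat. c + int k \<in> value_semigroup R v))"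

definition multiplicity_val :: "'k::field set \<Rightarrow> ('k \<Rightarrow> int) \<Rightarrow> int" where
  "multiplicity_val R v = (LEAST e. e \<in> value_semigroup R v \<and> 0 < e)"

definition delta_inv :: "'k::field set \<Rightarrow> int" where
  "delta_inv R = int (mod_length R (int_closure R) R)"

definition cm_type :: "'k::field set \<Rightarrow> int" where
  "cm_type R = int (mod_length R (colon R (maxideal R)) R)"

definition b_inv :: "'k::field set \<Rightarrow> ('k \<Rightarrow> int) \<Rightarrow> int" where
  "b_inv R v = (conductor_val R v - delta_inv R) * cm_type R - delta_inv R"

fun sg_elem :: "'k::field set \<Rightarrow> ('k \<Rightarrow> int) \<Rightarrow> nat \<Rightarrow> int" where
  "sg_elem R v 0 = 0"
| "sg_elem R v (Suc i) = (LEAST x. x \<in> value_semigroup R v \<and> sg_elem R v i < x)"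

definition val_ideal :: "'k::field set \<Rightarrow> ('k \<Rightarrow> int) \<Rightarrow> nat \<Rightarrow> 'k set" where
  "val_ideal R v i = {a \<in> R. a = 0 \<or> sg_elem R v i \<le> v a}"

(* r_i = l_R((R :_K R_i)/(R :_K R_{i-1})), for i >= 1 *)
definition type_seq_term :: "'k::field set \<Rightarrow> ('k \<Rightarrow> int) \<Rightarrow> nat \<Rightarrow> int" where
  "type_seq_term R v i = int (mod_length R (colon R (val_ideal R v i)) (colon R (val_ideal R v (i - 1))))"

definition type_sequence :: "'k::field set \<Rightarrow> ('k \<Rightarrow> int) \<Rightarrow> int list" where
  "type_sequence R v = map (type_seq_term R v) [1..<nat (conductor_val R v - delta_inv R) + 1]"

end

theory Submission
  imports Defs
begin

text \<open>
  Thanks to residual rationality, the length of a quotient \<open>M / N\<close> of \<open>R\<close>-modules lying between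
  \<open>R\<close> and its integral closure is the number of values of \<open>M\<close> that \<open>N\<close> does not have. Hence
  \<open>\<delta> = r\<^sub>1 + \<dots> + r\<^sub>n\<close>, where \<open>r\<^sub>i\<close> counts the new values of \<open>A\<^sub>i = R : R\<^sub>i\<close> over \<open>A\<^sub>i\<^sub>-\<^sub>1\<close>;
  multiplication by an element of value \<open>s\<^sub>i\<^sub>-\<^sub>1\<close> embeds \<open>A\<^sub>i / A\<^sub>i\<^sub>-\<^sub>1\<close> into \<open>A\<^sub>1 / R = (R : \<mm>) / R\<close>,
  so \<open>1 \<le> r\<^sub>i \<le> r\<close>. Therefore \<open>b = n r - \<delta> = \<Sum> (r - r\<^sub>i) \<ge> 0\<close>, with equality exactly when the
  type sequence is constant.

  If it is constant, the last term shows that the values of \<open>R : \<mm>\<close> outside \<open>v(R)\<close> form the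
  interval \<open>(s\<^sub>n\<^sub>-\<^sub>1, c)\<close>, so \<open>r = q - 1\<close> with \<open>q = c - s\<^sub>n\<^sub>-\<^sub>1 \<le> e\<close>, and \<open>[c - e, s\<^sub>n\<^sub>-\<^sub>1] \<subseteq> v(R)\<close>.
  Comparing \<open>\<delta> = n r\<close> with the partial sum of the \<open>r\<^sub>i\<close> up to the index of \<open>c - e\<close>, which
  dominates the gaps above \<open>e\<close>, gives \<open>(e - q)(q - 2) \<le> 0\<close>: either \<open>r = 1\<close>, or \<open>r = e - 1\<close> and
  \<open>c = n e\<close>, which makes \<open>v(R)\<close> the multiples of \<open>e\<close> up to the conductor. Conversely, for such a
  semigroup \<open>n e \<le> c\<close>, and \<open>r \<le> e - 1\<close> always, so \<open>n r \<le> \<delta>\<close>.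
\<close>
definition value_set :: "('k::field \<Rightarrow> int) \<Rightarrow> 'k set \<Rightarrow> int set" where
  "value_set v M = {v x | x. x \<in> M \<and> x \<noteq> 0}"

lemma value_set_mono: "A \<subseteq> B \<Longrightarrow> value_set v A \<subseteq> value_set v B"
  unfolding value_set_def by blast

lemma val_in_value_set: "x \<in> M \<Longrightarrow> x \<noteq> 0 \<Longrightarrow> v x \<in> value_set v M"
  unfolding value_set_def by blast

definition submod_chain :: "'k::field set \<Rightarrow> 'k set \<Rightarrow> 'k set \<Rightarrow> nat \<Rightarrow> (nat \<Rightarrow> 'k set) \<Rightarrow> bool" where
  "submod_chain R N M k C \<longleftrightarrow>
     C 0 = N \<and> C k = M \<and> (\<forall>i\<le>k. submod R (C i)) \<and> (\<forall>i<k. C i \<subset> C (Suc i))"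

lemma mod_length_eq_Sup_submod_chain:
  "mod_length R M N = Sup {k. \<exists>C. submod_chain R N M k C}"
  unfolding mod_length_def submod_chain_def ..

lemma submod_chain_mono:
  assumes "submod_chain R N M k C" "i \<le> j" "j \<le> k"
  shows "C i \<subseteq> C j"
  using assms(2,3)
proof (induction j)
  case (Suc j)
  show ?case
  proof (cases "i = Suc j")
    case False
    then have "C i \<subseteq> C j" using Suc by simp
    also have "C j \<subseteq> C (Suc j)"
      using assms(1) Suc.prems(2) unfolding submod_chain_def by (simp add: Suc_le_eq less_imp_le)
    finally show ?thesis .
  qed simp
qed simp

lemma submod_chain_extend:
  assumes "submod_chain R N M' k C" "M' \<subset> M" "submod R M"
  shows "submod_chain R N M (Suc k) (C(Suc k := M))"
  unfolding submod_chain_def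
proof (intro conjI allI impI)
  show "(C(Suc k := M)) 0 = N" "(C(Suc k := M)) (Suc k) = M"
    using assms(1) unfolding submod_chain_def by simp_all
  show "submod R ((C(Suc k := M)) i)" if "i \<le> Suc k" for i
    using assms(1,3) that unfolding submod_chain_def by (cases "i = Suc k") simp_all
  show "(C(Suc k := M)) i \<subset> (C(Suc k := M)) (Suc i)" if "i < Suc k" for i
    using assms(1,2) that unfolding submod_chain_def by (cases "i = k") simp_all
qed

lemma int_Least_nonneg:
  fixes P :: "int \<Rightarrow> bool"
  assumes "P k" and "\<And>x. P x \<Longrightarrow> 0 \<le> x"
  shows "P (LEAST x. P x)" and "\<And>y. P y \<Longrightarrow> (LEAST x. P x) \<le> y"
proof -
  define n where "n = (LEAST n::nat. P (int n))"
  have Pn: "P (int n)"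
    unfolding n_def by (rule LeastI[of _ "nat k"]) (use assms in simp)
  have le: "int n \<le> y" if "P y" for y
  proof -
    have "0 \<le> y" using assms(2) that .
    then have "n \<le> nat y" unfolding n_def by (intro Least_le) (simp add: that)
    then show ?thesis using \<open>0 \<le> y\<close> by simp
  qed
  have "(LEAST x. P x) = int n" by (rule Least_equality) (use Pn le in auto)
  then show "P (LEAST x. P x)" and "\<And>y. P y \<Longrightarrow> (LEAST x. P x) \<le> y" using Pn le by simp_all
qed

lemma sum_card_Diff_telescope:
  fixes F :: "nat \<Rightarrow> 'a set"
  assumes "\<And>i. i < n \<Longrightarrow> F i \<subseteq> F (Suc i)" and "finite (F n - F 0)"
  shows "(\<Sum>i=1..n. card (F i - F (i - 1))) = card (F n - F 0)"
  using assms
proof (induction n)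
  case (Suc n)
  note mono = Suc.prems(1)
  have "F 0 \<subseteq> F j" if "j \<le> n" for j
    using that
  proof (induction j)
    case (Suc j)
    then show ?case using mono[of j] by simp
  qed simp
  then have F0n: "F 0 \<subseteq> F n" by simp
  have Fn: "F n \<subseteq> F (Suc n)" using Suc.prems(1) by simp
  have fin1: "finite (F n - F 0)" and fin2: "finite (F (Suc n) - F n)"
    using Suc.prems(2) F0n Fn by (meson Diff_mono finite_subset order_refl)+
  have "F (Suc n) - F 0 = (F (Suc n) - F n) \<union> (F n - F 0)" using F0n Fn by blast
  then have "card (F (Suc n) - F 0) = card (F (Suc n) - F n) + card (F n - F 0)"
    using card_Un_disjoint[OF fin2 fin1] by auto
  then show ?case using Suc.IH Suc.prems(1) fin1 by simp
qed simp

section \<open>Discrete valuations\<close>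

locale normalized_valuation =
  fixes v :: "'k::field \<Rightarrow> int"
  assumes discrete_valuation: "discrete_valuation v"
begin

lemma val_mult: "x \<noteq> 0 \<Longrightarrow> y \<noteq> 0 \<Longrightarrow> v (x * y) = v x + v y"
  using discrete_valuation unfolding discrete_valuation_def by blast

lemma val_add_ge: "x \<noteq> 0 \<Longrightarrow> y \<noteq> 0 \<Longrightarrow> x + y \<noteq> 0 \<Longrightarrow> min (v x) (v y) \<le> v (x + y)"
  using discrete_valuation unfolding discrete_valuation_def by blast

lemma val_one [simp]: "v 1 = 0"
  using val_mult[of 1 1] by simp

lemma val_uminus: "x \<noteq> 0 \<Longrightarrow> v (- x) = v x"
proof -
  have "v (-1) = 0" using val_mult[of "-1" "-1"] by simp
  then show "x \<noteq> 0 \<Longrightarrow> v (- x) = v x" using val_mult[of "-1" x] by simp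
qed

lemma val_inverse: "x \<noteq> 0 \<Longrightarrow> v (inverse x) = - v x"
  using val_mult[of x "inverse x"] by simp

lemma val_divide: "x \<noteq> 0 \<Longrightarrow> y \<noteq> 0 \<Longrightarrow> v (x / y) = v x - v y"
  using val_mult[of x "inverse y"] val_inverse[of y] by (simp add: divide_inverse)

lemma val_add_eq_left:
  assumes "x \<noteq> 0" "y \<noteq> 0" "v x < v y"
  shows "x + y \<noteq> 0" and "v (x + y) = v x"
proof -
  show nz: "x + y \<noteq> 0"
    using assms val_uminus[of y] by (auto simp: add_eq_0_iff)
  have "min (v (x + y)) (v (- y)) \<le> v x"
    using val_add_ge[of "x + y" "- y"] nz assms by simp
  then show "v (x + y) = v x"
    using val_add_ge[of x y] val_uminus[of y] nz assms by linarith
qed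

lemma val_add_cases:
  assumes "x \<noteq> 0" "y \<noteq> 0" "x + y \<noteq> 0"
  shows "v (x + y) = v x \<or> v (x + y) = v y \<or> (v x = v y \<and> v x < v (x + y))"
proof (cases "v x" "v y" rule: linorder_cases)
  case less
  then show ?thesis using val_add_eq_left[of x y] assms by simp
next
  case greater
  then show ?thesis using val_add_eq_left[of y x] assms by (simp add: add.commute)
next
  case equal
  then show ?thesis using val_add_ge[of x y] assms by auto
qed

lemma val_power: "t \<noteq> 0 \<Longrightarrow> v (t ^ n) = int n * v t"
  by (induction n) (auto simp: val_mult algebra_simps)

lemma val_surj: "\<exists>x. x \<noteq> 0 \<and> v x = j"
proof -
  obtain t where t: "t \<noteq> 0" "v t = 1"
    using discrete_valuation unfolding discrete_valuation_def by blast
  show ?thesis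
  proof (cases "0 \<le> j")
    case True
    then show ?thesis using val_power[of t "nat j"] t by (intro exI[of _ "t ^ nat j"]) auto
  next
    case False
    then show ?thesis using val_power[of t "nat (- j)"] t val_inverse[of "t ^ nat (- j)"]
      by (intro exI[of _ "inverse (t ^ nat (- j))"]) auto
  qed
qed

lemma val_ring_iff: "x \<in> val_ring v \<longleftrightarrow> x = 0 \<or> 0 \<le> v x"
  by (simp add: val_ring_def)

lemma val_ring_add:
  assumes "x \<in> val_ring v" "y \<in> val_ring v" shows "x + y \<in> val_ring v"
proof (cases "x = 0 \<or> y = 0 \<or> x + y = 0")
  case False
  then have "min (v x) (v y) \<le> v (x + y)" using val_add_ge by blast
  then show ?thesis using assms False unfolding val_ring_iff by linarith
qed (use assms in \<open>auto simp: val_ring_iff\<close>)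

lemma val_ring_mult:
  assumes "x \<in> val_ring v" "y \<in> val_ring v" shows "x * y \<in> val_ring v"
proof (cases "x = 0 \<or> y = 0")
  case False
  then show ?thesis using assms val_mult[of x y] unfolding val_ring_iff by simp
qed (use assms in \<open>auto simp: val_ring_iff\<close>)

lemma value_set_val_ring: "value_set v (val_ring v) = {w. 0 \<le> w}"
proof
  show "value_set v (val_ring v) \<subseteq> {w. 0 \<le> w}"
    unfolding value_set_def by (auto simp: val_ring_iff)
  show "{w. 0 \<le> w} \<subseteq> value_set v (val_ring v)"
  proof
    fix w :: int assume "w \<in> {w. 0 \<le> w}"
    moreover obtain x where "x \<noteq> 0" "v x = w" using val_surj by blast
    ultimately have "x \<in> val_ring v" "x \<noteq> 0" "v x = w" by (simp_all add: val_ring_iff)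
    then show "w \<in> value_set v (val_ring v)" unfolding value_set_def by blast
  qed
qed

end

section \<open>Lengths of modules between \<open>R\<close> and its integral closure\<close>

locale analytically_irreducible = normalized_valuation v for v :: "'k::field \<Rightarrow> int" +
  fixes R :: "'k set"
  assumes subring: "subring R"
    and quotient_field: "quotient_field_of R"
    and int_closure_eq: "int_closure R = val_ring v"
    and finite_int_closure: "finite_module R (int_closure R)"
    and residually_rational: "residually_rational R v"
begin

lemma zero_in_R: "0 \<in> R" and one_in_R: "1 \<in> R"
  using subring by (auto simp: subring_def)

lemma add_in_R: "a \<in> R \<Longrightarrow> b \<in> R \<Longrightarrow> a + b \<in> R"
  and diff_in_R: "a \<in> R \<Longrightarrow> b \<in> R \<Longrightarrow> a - b \<in> R"
  and mult_in_R: "a \<in> R \<Longrightarrow> b \<in> R \<Longrightarrow> a * b \<in> R"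
  using subring by (auto simp: subring_def)

lemma uminus_in_R: "a \<in> R \<Longrightarrow> - a \<in> R"
  using diff_in_R[of 0 a] zero_in_R by simp

lemma power_in_R: "a \<in> R \<Longrightarrow> a ^ n \<in> R"
  by (induction n) (simp_all add: one_in_R mult_in_R)

lemma sum_in_R: "finite A \<Longrightarrow> (\<And>x. x \<in> A \<Longrightarrow> f x \<in> R) \<Longrightarrow> sum f A \<in> R"
  by (induction A rule: finite_induct) (auto simp: zero_in_R add_in_R)

lemma R_subset_val_ring: "R \<subseteq> val_ring v"
proof
  fix a assume a: "a \<in> R"
  have "a \<in> int_closure R"
    unfolding int_closure_def
    by (rule CollectI, rule exI[of _ 1], simp, rule exI[of _ "\<lambda>_. - a"], simp add: uminus_in_R a)
  then show "a \<in> val_ring v" using int_closure_eq by simp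
qed

lemma val_nonneg: "a \<in> R \<Longrightarrow> a \<noteq> 0 \<Longrightarrow> 0 \<le> v a"
  using R_subset_val_ring val_ring_iff by blast

lemma common_denominator: "\<exists>d\<in>R. d \<noteq> 0 \<and> (\<forall>z\<in>val_ring v. d * z \<in> R)"
proof -
  obtain F where F: "finite F" "int_closure R = {\<Sum>x\<in>F. a x * x | a. \<forall>x\<in>F. a x \<in> R}"
    using finite_int_closure unfolding finite_module_def by blast
  have "\<exists>d\<in>R. d \<noteq> 0 \<and> (\<forall>y\<in>G. d * y \<in> R)" if "finite G" for G :: "'k set"
    using that
  proof (induction G rule: finite_induct)
    case empty then show ?case using one_in_R by (intro bexI[of _ 1]) simp_all
  next
    case (insert y G)
    then obtain d where d: "d \<in> R" "d \<noteq> 0" "\<forall>y\<in>G. d * y \<in> R" by blast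
    obtain a b where ab: "a \<in> R" "b \<in> R" "b \<noteq> 0" "y = a / b"
      using quotient_field unfolding quotient_field_of_def by blast
    have "d * b * y = d * a" using ab by simp
    then have "d * b * y \<in> R" using ab d mult_in_R by simp
    moreover have "d * b * z \<in> R" if "z \<in> G" for z
      using mult_in_R[OF ab(2), of "d * z"] d(3) that by (simp add: algebra_simps)
    ultimately show ?case using d ab mult_in_R by (intro bexI[of _ "d * b"]) auto
  qed
  then obtain d where d: "d \<in> R" "d \<noteq> 0" "\<forall>y\<in>F. d * y \<in> R" using F(1) by blast
  have "d * z \<in> R" if "z \<in> val_ring v" for z
  proof -
    have "z \<in> {\<Sum>x\<in>F. a x * x | a. \<forall>x\<in>F. a x \<in> R}" using F(2) int_closure_eq that by simp
    then obtain a where a: "\<forall>x\<in>F. a x \<in> R" "z = (\<Sum>x\<in>F. a x * x)" by blast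
    have "d * z = (\<Sum>x\<in>F. a x * (d * x))"
      unfolding a(2) sum_distrib_left by (simp add: mult.left_commute)
    also have "\<dots> \<in> R" using F(1) a(1) d(3) by (intro sum_in_R) (simp_all add: mult_in_R)
    finally show ?thesis .
  qed
  then show ?thesis using d by blast
qed

lemma large_values_in_R: "\<exists>K. \<forall>x. x \<noteq> 0 \<and> K \<le> v x \<longrightarrow> x \<in> R"
proof -
  obtain d where d: "d \<in> R" "d \<noteq> 0" "\<forall>z\<in>val_ring v. d * z \<in> R" using common_denominator by blast
  have "x \<in> R" if "x \<noteq> 0" "v d \<le> v x" for x
  proof -
    have "x / d \<in> val_ring v" using val_divide[of x d] that d by (simp add: val_ring_iff)
    then show ?thesis using d by force
  qed
  then show ?thesis by blast
qed

text \<open>The only place where residual rationality is used.\<close>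
lemma approx_by_R_multiple:
  assumes "x \<noteq> 0" "y \<noteq> 0" "v x = v y"
  obtains a where "a \<in> R" "x - a * y = 0 \<or> v y < v (x - a * y)"
proof -
  have "x / y \<in> int_closure R"
    using val_divide[of x y] assms int_closure_eq by (simp add: val_ring_iff)
  then obtain a where a: "a \<in> R" "x / y - a \<in> val_maxideal v"
    using residually_rational unfolding residually_rational_def by blast
  have eq: "x - a * y = y * (x / y - a)" using assms(2) by (simp add: field_simps)
  have "x - a * y = 0 \<or> v y < v (x - a * y)"
  proof (cases "x / y - a = 0")
    case False
    then show ?thesis using a(2) eq val_mult[OF assms(2) False] by (simp add: val_maxideal_def)
  qed (simp add: eq)
  then show thesis using a(1) that by blast
qed

lemma submod_zero: "submod R M \<Longrightarrow> 0 \<in> M"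
  and submod_add: "submod R M \<Longrightarrow> x \<in> M \<Longrightarrow> y \<in> M \<Longrightarrow> x + y \<in> M"
  and submod_smult: "submod R M \<Longrightarrow> a \<in> R \<Longrightarrow> x \<in> M \<Longrightarrow> a * x \<in> M"
  unfolding submod_def by auto

lemma submod_diff:
  assumes "submod R M" "x \<in> M" "y \<in> M" shows "x - y \<in> M"
proof -
  have "- 1 * y \<in> M" using submod_smult[OF assms(1) uminus_in_R[OF one_in_R] assms(3)] .
  then show ?thesis using submod_add[OF assms(1,2)] by (metis mult_minus1 diff_conv_add_uminus)
qed

lemma submod_R: "submod R R"
  unfolding submod_def using zero_in_R add_in_R mult_in_R by auto

lemma submod_val_ring: "submod R (val_ring v)"
  unfolding submod_def
proof (intro conjI ballI)
  show "0 \<in> val_ring v" by (simp add: val_ring_iff)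
qed (use val_ring_add val_ring_mult R_subset_val_ring in blast)+

lemma finite_value_set_Diff:
  assumes "M \<subseteq> val_ring v" "R \<subseteq> N"
  shows "finite (value_set v M - value_set v N)"
proof -
  obtain K where K: "\<forall>x. x \<noteq> 0 \<and> K \<le> v x \<longrightarrow> x \<in> R" using large_values_in_R by blast
  have "value_set v M - value_set v N \<subseteq> {0..<K}"
  proof
    fix w assume w: "w \<in> value_set v M - value_set v N"
    then obtain x where x: "x \<in> M" "x \<noteq> 0" "w = v x" unfolding value_set_def by blast
    then have "x \<notin> N" using w unfolding value_set_def by blast
    then have "v x < K" using x(2) K assms(2) by (meson not_le subsetD)
    moreover have "0 \<le> v x" using x assms(1) by (auto simp: val_ring_iff)
    ultimately show "w \<in> {0..<K}" using x(3) by simp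
  qed
  then show ?thesis using finite_subset by blast
qed

text \<open>The largest value of \<open>M\<close> missing from \<open>N\<close> exists because all large values lie in \<open>R\<close>; were it
  attained in \<open>N\<close>, subtracting an \<open>R\<close>-multiple would produce a larger such value.\<close>
lemma value_set_separates:
  assumes N: "submod R N" and M: "submod R M" and "N \<subseteq> M" "M \<subseteq> val_ring v" "R \<subseteq> N" "N \<noteq> M"
  shows "\<exists>w\<in>value_set v M. w \<notin> value_set v N"
proof -
  define X where "X = {v x | x. x \<in> M \<and> x \<notin> N}"
  obtain K where K: "\<forall>x. x \<noteq> 0 \<and> K \<le> v x \<longrightarrow> x \<in> R" using large_values_in_R by blast
  have "X \<subseteq> {0..<K}"
  proof
    fix w assume "w \<in> X"
    then obtain x where x: "x \<in> M" "x \<notin> N" "w = v x" unfolding X_def by blast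
    then have "x \<noteq> 0" using submod_zero[OF N] by auto
    then have "v x < K" using x(2) K assms(5) by (meson not_le subsetD)
    moreover have "0 \<le> v x" using x \<open>x \<noteq> 0\<close> assms(4) by (auto simp: val_ring_iff)
    ultimately show "w \<in> {0..<K}" using x(3) by simp
  qed
  then have "finite X" using finite_subset by blast
  moreover have "X \<noteq> {}"
    using psubset_imp_ex_mem[of N M] assms(3,6) unfolding X_def by blast
  define m where "m = Max X"
  have "m \<in> X" and max: "\<forall>w\<in>X. w \<le> m"
    using \<open>finite X\<close> \<open>X \<noteq> {}\<close> unfolding m_def by simp_all
  obtain x where x: "x \<in> M" "x \<notin> N" "v x = m"
    using \<open>m \<in> X\<close> unfolding X_def by (auto simp del: m_def)
  have x0: "x \<noteq> 0" using x submod_zero[OF N] by auto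
  have "v x \<notin> value_set v N"
  proof
    assume "v x \<in> value_set v N"
    then obtain y where y: "y \<in> N" "y \<noteq> 0" "v x = v y" unfolding value_set_def by blast
    obtain a where a: "a \<in> R" "x - a * y = 0 \<or> v y < v (x - a * y)"
      using approx_by_R_multiple[OF x0 y(2) y(3)] by blast
    have ay: "a * y \<in> N" using submod_smult[OF N a(1) y(1)] .
    have "x - a * y \<notin> N"
    proof
      assume "x - a * y \<in> N"
      then have "(x - a * y) + a * y \<in> N" using submod_add[OF N _ ay] by blast
      then show False using x(2) by simp
    qed
    moreover have "x - a * y \<in> M" using submod_diff[OF M x(1)] ay assms(3) by blast
    ultimately have "v (x - a * y) \<in> X" unfolding X_def by blast
    then have "v (x - a * y) \<le> m" using max by blast
    moreover have "x - a * y \<noteq> 0" using \<open>x - a * y \<notin> N\<close> submod_zero[OF N] by auto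
    ultimately show False using a(2) y(3) x(3) by simp
  qed
  then show ?thesis using x x0 unfolding value_set_def by blast
qed

lemma submod_eq_if_value_set_subset:
  assumes "submod R N" "submod R M" "N \<subseteq> M" "M \<subseteq> val_ring v" "R \<subseteq> N"
    and "value_set v M \<subseteq> value_set v N"
  shows "N = M"
  using value_set_separates[OF assms(1-5)] assms(6) by blast


definition plus_above :: "'k set \<Rightarrow> 'k set \<Rightarrow> int \<Rightarrow> 'k set" where
  "plus_above N M g = {y + z | y z. y \<in> N \<and> z \<in> M \<and> (z = 0 \<or> g < v z)}"

lemma submod_plus_above:
  assumes N: "submod R N" and M: "submod R M"
  shows "submod R (plus_above N M g)"
  unfolding submod_def
proof (intro conjI ballI)
  show "0 \<in> plus_above N M g"
    unfolding plus_above_def using submod_zero[OF N] submod_zero[OF M] by force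
next
  fix p q assume "p \<in> plus_above N M g" "q \<in> plus_above N M g"
  then obtain y1 z1 y2 z2 where yz: "p = y1 + z1" "y1 \<in> N" "z1 \<in> M" "z1 = 0 \<or> g < v z1"
    "q = y2 + z2" "y2 \<in> N" "z2 \<in> M" "z2 = 0 \<or> g < v z2"
    unfolding plus_above_def by blast
  have "z1 + z2 = 0 \<or> g < v (z1 + z2)"
  proof (cases "z1 = 0 \<or> z2 = 0 \<or> z1 + z2 = 0")
    case False
    then show ?thesis using val_add_ge[of z1 z2] yz(4,8) by auto
  qed (use yz in auto)
  moreover have "p + q = (y1 + y2) + (z1 + z2)" using yz by simp
  ultimately show "p + q \<in> plus_above N M g"
    unfolding plus_above_def using submod_add[OF N] submod_add[OF M] yz by blast
next
  fix a p assume a: "a \<in> R" and "p \<in> plus_above N M g"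
  then obtain y z where yz: "p = y + z" "y \<in> N" "z \<in> M" "z = 0 \<or> g < v z"
    unfolding plus_above_def by blast
  have "a * z = 0 \<or> g < v (a * z)"
  proof (cases "a = 0 \<or> z = 0")
    case False
    then show ?thesis using val_mult[of a z] val_nonneg[OF a] yz(4) by auto
  qed auto
  moreover have "a * p = a * y + a * z" using yz by (simp add: algebra_simps)
  ultimately show "a * p \<in> plus_above N M g"
    unfolding plus_above_def using submod_smult[OF N a] submod_smult[OF M a] yz by blast
qed

lemma subset_plus_above: "0 \<in> M \<Longrightarrow> N \<subseteq> plus_above N M g"
  unfolding plus_above_def by force

lemma plus_above_subset: "submod R M \<Longrightarrow> N \<subseteq> M \<Longrightarrow> plus_above N M g \<subseteq> M"
  unfolding plus_above_def using submod_add by blast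

lemma mem_plus_above: "0 \<in> N \<Longrightarrow> z \<in> M \<Longrightarrow> g < v z \<Longrightarrow> z \<in> plus_above N M g"
  unfolding plus_above_def by force

lemma value_set_plus_above:
  assumes "w \<in> value_set v (plus_above N M g)"
  shows "w \<in> value_set v N \<or> g < w"
proof -
  obtain y z where yz: "y + z \<noteq> 0" "w = v (y + z)" "y \<in> N" "z = 0 \<or> g < v z"
    using assms unfolding value_set_def plus_above_def by blast
  consider "z = 0" | "y = 0" | "y \<noteq> 0" "z \<noteq> 0" by blast
  then show ?thesis
  proof cases
    case 1
    then show ?thesis using yz unfolding value_set_def by auto
  next
    case 2
    then show ?thesis using yz by auto
  next
    case 3
    then have "v (y + z) = v y \<or> g < v (y + z)"
      using val_add_cases[of y z] yz by auto
    then show ?thesis using yz 3 unfolding value_set_def by auto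
  qed
qed

lemma submod_chain_length_le:
  assumes N: "submod R N" and "R \<subseteq> N" "M \<subseteq> val_ring v" and C: "submod_chain R N M k C"
  shows "k \<le> card (value_set v M - value_set v N)"
proof -
  have fin: "finite (value_set v M - value_set v N)"
    using finite_value_set_Diff assms(2,3) by blast
  have "j \<le> card (value_set v (C j) - value_set v N)" if "j \<le> k" for j
    using that
  proof (induction j)
    case (Suc j)
    have NC: "N \<subseteq> C j" and CM: "C (Suc j) \<subseteq> M"
      using submod_chain_mono[OF C, of 0 j] submod_chain_mono[OF C, of "Suc j" k] C Suc.prems
      unfolding submod_chain_def by auto
    have "C j \<subset> C (Suc j)" "submod R (C j)" "submod R (C (Suc j))"
      using C Suc.prems unfolding submod_chain_def by auto
    then obtain w where w: "w \<in> value_set v (C (Suc j))" "w \<notin> value_set v (C j)"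
      using value_set_separates CM assms(2,3) NC by (metis order_trans psubset_imp_subset order.strict_implies_not_eq)
    have "value_set v (C j) - value_set v N \<subset> value_set v (C (Suc j)) - value_set v N"
      using w value_set_mono NC \<open>C j \<subset> C (Suc j)\<close> by blast
    moreover have "value_set v (C (Suc j)) - value_set v N \<subseteq> value_set v M - value_set v N"
      using value_set_mono[OF CM] by blast
    ultimately have "card (value_set v (C j) - value_set v N) < card (value_set v (C (Suc j)) - value_set v N)"
      using psubset_card_mono fin finite_subset by metis
    then show ?case using Suc by simp
  qed simp
  then show ?thesis using C unfolding submod_chain_def by auto
qed

text \<open>Thresholding at the smallest value of \<open>M\<close> missing from \<open>N\<close> removes exactly that value; this
  builds maximal chains one step at a time.\<close>
lemma value_set_plus_above_Min:
  assumes N: "submod R N" "R \<subseteq> N" and M: "submod R M" "N \<subseteq> M" "M \<subseteq> val_ring v"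
    and G: "G = value_set v M - value_set v N" "G \<noteq> {}"
  shows "value_set v (plus_above N M (Min G)) - value_set v N = G - {Min G}"
proof
  have "finite G" using finite_value_set_Diff[OF M(3) N(2)] G(1) by simp
  then have gmin: "\<forall>w\<in>G. Min G \<le> w" by simp
  show "value_set v (plus_above N M (Min G)) - value_set v N \<subseteq> G - {Min G}"
  proof
    fix w assume w: "w \<in> value_set v (plus_above N M (Min G)) - value_set v N"
    then have "Min G < w" using value_set_plus_above by blast
    moreover have "w \<in> G"
      using w value_set_mono[OF plus_above_subset[OF M(1,2)]] G(1) by blast
    ultimately show "w \<in> G - {Min G}" by simp
  qed
  show "G - {Min G} \<subseteq> value_set v (plus_above N M (Min G)) - value_set v N"
  proof
    fix w assume w: "w \<in> G - {Min G}"
    then have "Min G < w" using gmin by force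
    obtain x where x: "x \<in> M" "x \<noteq> 0" "w = v x" using w G(1) unfolding value_set_def by blast
    then have "x \<in> plus_above N M (Min G)"
      using mem_plus_above[OF submod_zero[OF N(1)]] \<open>Min G < w\<close> by blast
    then show "w \<in> value_set v (plus_above N M (Min G)) - value_set v N"
      using x w G(1) val_in_value_set by blast
  qed
qed

lemma submod_chain_exists:
  assumes N: "submod R N" and "R \<subseteq> N" and M: "submod R M" "N \<subseteq> M" "M \<subseteq> val_ring v"
  shows "\<exists>C. submod_chain R N M (card (value_set v M - value_set v N)) C"
  using M
proof (induction "card (value_set v M - value_set v N)" arbitrary: M)
  case 0
  then have "N = M"
    using submod_eq_if_value_set_subset[OF N] finite_value_set_Diff assms(2) by auto
  then show ?case using N unfolding submod_chain_def by (intro exI[of _ "\<lambda>_. N"]) simp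
next
  case (Suc k M)
  define G where "G = value_set v M - value_set v N"
  have "finite G" using finite_value_set_Diff[OF Suc.prems(3) assms(2)] unfolding G_def .
  have "card G = Suc k" using Suc.hyps(2) unfolding G_def by simp
  then have "G \<noteq> {}" by auto
  define M' where "M' = plus_above N M (Min G)"
  have M': "submod R M'" "N \<subseteq> M'" "M' \<subseteq> M"
    unfolding M'_def using submod_plus_above[OF N Suc.prems(1)] subset_plus_above[OF submod_zero]
      plus_above_subset Suc.prems by blast+
  have M'_values: "value_set v M' - value_set v N = G - {Min G}"
    unfolding M'_def using value_set_plus_above_Min[OF N assms(2) Suc.prems G_def \<open>G \<noteq> {}\<close>] .
  then have "card (value_set v M' - value_set v N) = k"
    using \<open>card G = Suc k\<close> \<open>finite G\<close> \<open>G \<noteq> {}\<close> by simp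
  then obtain C' where "submod_chain R N M' k C'"
    using Suc.hyps(1)[of M'] M' Suc.prems(3) by blast
  moreover have "M' \<noteq> M"
  proof
    assume "M' = M"
    then have "Min G \<in> G - {Min G}" using M'_values G_def Min_in[OF \<open>finite G\<close> \<open>G \<noteq> {}\<close>] by simp
    then show False by simp
  qed
  with M'(3) have "M' \<subset> M" by blast
  ultimately have "submod_chain R N M (Suc k) (C'(Suc k := M))"
    using submod_chain_extend Suc.prems(1) by blast
  then show ?case using Suc.hyps(2) by metis
qed

lemma mod_length_eq_card_value_set:
  assumes "submod R N" "submod R M" "N \<subseteq> M" "M \<subseteq> val_ring v" "R \<subseteq> N"
  shows "mod_length R M N = card (value_set v M - value_set v N)"
  unfolding mod_length_eq_Sup_submod_chain
proof (rule cSup_eq_maximum)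
  show "card (value_set v M - value_set v N) \<in> {k. \<exists>C. submod_chain R N M k C}"
    using submod_chain_exists assms by blast
  show "\<And>k. k \<in> {k. \<exists>C. submod_chain R N M k C} \<Longrightarrow> k \<le> card (value_set v M - value_set v N)"
    using submod_chain_length_le assms by blast
qed


lemma inverse_in_R:
  assumes a: "a \<in> R" "a \<noteq> 0" "v a = 0"
  shows "inverse a \<in> R"
proof -
  define y where "y = inverse a"
  have ya: "y * a = 1" using a y_def by simp
  have "y \<in> int_closure R" using int_closure_eq val_inverse[of a] a y_def by (simp add: val_ring_iff)
  then obtain n b where nb: "n > 0" "\<forall>i<n. b i \<in> R" "y ^ n + (\<Sum>i<n. b i * y ^ i) = 0"
    unfolding int_closure_def by blast
  text \<open>Multiply the integral equation of \<open>y = a\<inverse>\<close> by \<open>a\<^sup>n\<^sup>-\<^sup>1\<close>.\<close>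
  have yi: "y ^ i * a ^ (n - 1) = a ^ (n - 1 - i)" if "i < n" for i
  proof -
    have "a ^ (n - 1) = a ^ i * a ^ (n - 1 - i)" using that by (simp add: power_add[symmetric])
    then show ?thesis using ya by (simp add: mult.assoc[symmetric] power_mult_distrib[symmetric])
  qed
  have yn: "y ^ n * a ^ (n - 1) = y"
  proof -
    have "y ^ n * a ^ (n - 1) = y * (y * a) ^ (n - 1)"
      using nb(1) by (cases n) (simp_all add: power_mult_distrib)
    then show ?thesis using ya by simp
  qed
  have "0 = (y ^ n + (\<Sum>i<n. b i * y ^ i)) * a ^ (n - 1)" using nb by simp
  also have "\<dots> = y + (\<Sum>i<n. b i * (y ^ i * a ^ (n - 1)))"
    unfolding distrib_right sum_distrib_right yn by (simp add: mult.assoc)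
  also have "\<dots> = y + (\<Sum>i<n. b i * a ^ (n - 1 - i))" using yi by simp
  finally have "y = - (\<Sum>i<n. b i * a ^ (n - 1 - i))" by (simp add: eq_neg_iff_add_eq_0)
  moreover have "(\<Sum>i<n. b i * a ^ (n - 1 - i)) \<in> R"
    using nb(2) by (intro sum_in_R) (simp_all add: mult_in_R power_in_R a(1))
  ultimately show ?thesis using uminus_in_R y_def by simp
qed

lemma maxideal_eq: "maxideal R = {a \<in> R. a = 0 \<or> 0 < v a}"
proof -
  have "inverse a \<notin> R \<longleftrightarrow> 0 < v a" if a: "a \<in> R" "a \<noteq> 0" for a
  proof
    assume "inverse a \<notin> R"
    then show "0 < v a" using inverse_in_R[OF a] val_nonneg[OF a] by force
  next
    assume "0 < v a"
    then have "inverse a \<notin> val_ring v" using val_inverse[OF a(2)] a by (simp add: val_ring_iff)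
    then show "inverse a \<notin> R" using R_subset_val_ring by blast
  qed
  then show ?thesis unfolding maxideal_def by auto
qed

section \<open>The value semigroup\<close>

abbreviation "S \<equiv> value_semigroup R v"
abbreviation "c \<equiv> conductor_val R v"
abbreviation "e \<equiv> multiplicity_val R v"
abbreviation "s \<equiv> sg_elem R v"

lemma S_eq_value_set: "S = value_set v R"
  by (simp add: value_set_def value_semigroup_def)

lemma in_S_iff: "w \<in> S \<longleftrightarrow> (\<exists>a\<in>R. a \<noteq> 0 \<and> v a = w)"
  unfolding value_semigroup_def by blast

lemma val_in_S: "a \<in> R \<Longrightarrow> a \<noteq> 0 \<Longrightarrow> v a \<in> S"
  unfolding in_S_iff by blast

lemma S_nonneg: "w \<in> S \<Longrightarrow> 0 \<le> w"
  unfolding in_S_iff using val_nonneg by blast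

lemma zero_in_S: "0 \<in> S"
  using val_in_S[OF one_in_R] by simp

lemma S_add:
  assumes "a \<in> S" "b \<in> S" shows "a + b \<in> S"
proof -
  obtain x y where "x \<in> R" "x \<noteq> 0" "v x = a" "y \<in> R" "y \<noteq> 0" "v y = b"
    using assms unfolding in_S_iff by blast
  then show ?thesis using val_in_S[of "x * y"] mult_in_R val_mult by simp
qed

lemma S_mult: "0 \<le> k \<Longrightarrow> a \<in> S \<Longrightarrow> k * a \<in> S"
proof (induction "nat k" arbitrary: k)
  case (Suc m)
  then have "(k - 1) * a \<in> S" by simp
  then have "(k - 1) * a + a \<in> S" using S_add Suc.prems(2) by blast
  then show ?case by (simp add: algebra_simps)
qed (simp add: zero_in_S)

lemma large_values_in_S: "\<exists>K. \<forall>w\<ge>K. w \<in> S"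
proof -
  obtain K where K: "\<forall>x. x \<noteq> 0 \<and> K \<le> v x \<longrightarrow> x \<in> R" using large_values_in_R by blast
  have "w \<in> S" if "K \<le> w" for w
  proof -
    obtain x where "x \<noteq> 0" "v x = w" using val_surj by blast
    then show ?thesis using K that val_in_S[of x] by simp
  qed
  then show ?thesis by blast
qed

lemma conductor:
  shows c_in_S: "c \<in> S" and ge_c_in_S: "c \<le> w \<Longrightarrow> w \<in> S"
    and c_le: "y \<in> S \<Longrightarrow> (\<forall>k::nat. y + int k \<in> S) \<Longrightarrow> c \<le> y"
proof -
  obtain K where K: "\<forall>w\<ge>K. w \<in> S" using large_values_in_S by blast
  let ?P = "\<lambda>y. y \<in> S \<and> (\<forall>k::nat. y + int k \<in> S)"
  have P: "?P (max K 0)" using K by auto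
  have nn: "\<And>y. ?P y \<Longrightarrow> 0 \<le> y" using S_nonneg by blast
  have "?P c" unfolding conductor_val_def by (rule int_Least_nonneg(1)[of ?P, OF P nn])
  have least: "c \<le> y" if "?P y" for y
    unfolding conductor_val_def by (rule int_Least_nonneg(2)[of ?P, OF P nn that])
  show "c \<in> S" using \<open>?P c\<close> by simp
  show "w \<in> S" if "c \<le> w"
  proof -
    have "c + int (nat (w - c)) \<in> S" using \<open>?P c\<close> by blast
    then show ?thesis using that by simp
  qed
  show "y \<in> S \<Longrightarrow> (\<forall>k::nat. y + int k \<in> S) \<Longrightarrow> c \<le> y" using least by blast
qed

lemma c_nonneg: "0 \<le> c"
  using c_in_S S_nonneg by blast

lemma c_minus_1_notin_S: "c - 1 \<notin> S"
proof
  assume "c - 1 \<in> S"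
  have "c - 1 + int k \<in> S" for k :: nat
  proof (cases k)
    case 0
    then show ?thesis using \<open>c - 1 \<in> S\<close> by simp
  next
    case (Suc m)
    then show ?thesis using ge_c_in_S[of "c - 1 + int k"] by simp
  qed
  then have "c \<le> c - 1" using c_le \<open>c - 1 \<in> S\<close> by blast
  then show False by simp
qed

text \<open>The submodule \<open>R + {z. v z \<ge> c}\<close> has the same values as \<open>R\<close>, hence equals \<open>R\<close>.\<close>
lemma in_R_if_val_ge_c:
  assumes "x \<noteq> 0" "c \<le> v x"
  shows "x \<in> R"
proof -
  define M where "M = plus_above R (val_ring v) (c - 1)"
  have M: "submod R M" "R \<subseteq> M" "M \<subseteq> val_ring v"
    unfolding M_def
    by (rule submod_plus_above[OF submod_R submod_val_ring],
        rule subset_plus_above, simp add: val_ring_iff,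
        rule plus_above_subset[OF submod_val_ring R_subset_val_ring])
  have "value_set v M \<subseteq> value_set v R"
  proof
    fix w assume "w \<in> value_set v M"
    then have "w \<in> value_set v R \<or> c - 1 < w" using value_set_plus_above unfolding M_def by blast
    then show "w \<in> value_set v R" using ge_c_in_S S_eq_value_set by auto
  qed
  then have "R = M" using submod_eq_if_value_set_subset[OF submod_R M(1,2,3) order_refl] by blast
  moreover have "x \<in> M"
    unfolding M_def using assms c_nonneg by (intro mem_plus_above) (simp_all add: zero_in_R val_ring_iff)
  ultimately show ?thesis by simp
qed

lemma multiplicity: "e \<in> S" "0 < e" "y \<in> S \<Longrightarrow> 0 < y \<Longrightarrow> e \<le> y"
proof -
  let ?P = "\<lambda>y. y \<in> S \<and> 0 < y"
  have P: "?P (max c 1)" using ge_c_in_S by simp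
  have nn: "\<And>y. ?P y \<Longrightarrow> 0 \<le> y" by simp
  have "e \<in> S \<and> 0 < e" unfolding multiplicity_val_def by (rule int_Least_nonneg(1)[of ?P, OF P nn])
  moreover have least: "e \<le> y" if "?P y" for y
    unfolding multiplicity_val_def by (rule int_Least_nonneg(2)[of ?P, OF P nn that])
  ultimately show "e \<in> S" "0 < e" "y \<in> S \<Longrightarrow> 0 < y \<Longrightarrow> e \<le> y" by simp_all
qed


lemma sg_elem_Suc:
  shows s_Suc_in_S: "s (Suc i) \<in> S" and s_less_Suc: "s i < s (Suc i)"
    and s_Suc_le: "y \<in> S \<Longrightarrow> s i < y \<Longrightarrow> s (Suc i) \<le> y"
proof -
  let ?P = "\<lambda>y. y \<in> S \<and> s i < y"
  have P: "?P (max (s i + 1) c)" using ge_c_in_S by simp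
  have nn: "\<And>y. ?P y \<Longrightarrow> 0 \<le> y" using S_nonneg by blast
  show "s (Suc i) \<in> S" "s i < s (Suc i)" using int_Least_nonneg(1)[of ?P, OF P nn] by simp_all
  show "y \<in> S \<Longrightarrow> s i < y \<Longrightarrow> s (Suc i) \<le> y" using int_Least_nonneg(2)[of ?P, OF P nn] by simp
qed

lemma s_in_S: "s i \<in> S"
proof (cases i)
  case (Suc j)
  then show ?thesis using s_Suc_in_S[of j] by (simp only:)
qed (simp add: zero_in_S)

lemma strict_mono_s: "strict_mono s"
  unfolding strict_mono_Suc_iff using s_less_Suc by blast

lemma s_le_iff: "s i \<le> s j \<longleftrightarrow> i \<le> j"
  using strict_mono_less_eq[OF strict_mono_s] .

lemma s_less_iff: "s i < s j \<longleftrightarrow> i < j"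
  using strict_mono_less[OF strict_mono_s] .

lemma s_one: "s 1 = e"
  by (simp add: multiplicity_val_def)

lemma card_S_below_s: "card (S \<inter> {0..<s i}) = i"
proof (induction i)
  case (Suc i)
  have "S \<inter> {0..<s (Suc i)} = insert (s i) (S \<inter> {0..<s i})"
    using s_Suc_le[of _ i] s_in_S[of i] S_nonneg[of "s i"] s_less_Suc[of i] by fastforce
  then show ?case using Suc by simp
qed simp

lemma s_card_S_below:
  assumes "x \<in> S"
  shows "s (card (S \<inter> {0..<x})) = x"
proof -
  define k where "k = card (S \<inter> {0..<x})"
  have "\<not> s k < x"
  proof
    assume "s k < x"
    then have "insert (s k) (S \<inter> {0..<s k}) \<subseteq> S \<inter> {0..<x}"
      using s_in_S S_nonneg[OF s_in_S] by auto
    then have "card (insert (s k) (S \<inter> {0..<s k})) \<le> k" unfolding k_def by (intro card_mono) auto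
    then show False using card_S_below_s[of k] by simp
  qed
  moreover have "\<not> x < s k"
  proof
    assume "x < s k"
    then have "insert x (S \<inter> {0..<x}) \<subseteq> S \<inter> {0..<s k}"
      using assms S_nonneg[OF assms] by auto
    then have "card (insert x (S \<inter> {0..<x})) \<le> k"
      using card_S_below_s[of k] card_mono[of "S \<inter> {0..<s k}"] by (metis finite_Int finite_atLeastLessThan_int)
    then show False unfolding k_def by simp
  qed
  ultimately show ?thesis unfolding k_def by simp
qed

text \<open>The paper's \<open>n = c - \<delta>\<close>, here defined as the number of elements of \<open>v(R)\<close> below the conductor
  (see \<open>c_minus_delta\<close>).\<close>
definition n_small :: nat where
  "n_small = card (S \<inter> {0..<c})"

lemma s_n_small: "s n_small = c"
  unfolding n_small_def using s_card_S_below[OF c_in_S] .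

lemma s_le_c: "i \<le> n_small \<Longrightarrow> s i \<le> c"
  using s_le_iff[of i n_small] s_n_small by simp

abbreviation "\<delta> \<equiv> delta_inv R"
abbreviation "r \<equiv> cm_type R"
abbreviation "r_seq \<equiv> type_seq_term R v"

lemma delta_eq_card_gaps: "\<delta> = int (card ({0..<c} - S))"
proof -
  have "value_set v (val_ring v) - value_set v R = {0..<c} - S"
    unfolding value_set_val_ring S_eq_value_set[symmetric] using ge_c_in_S by auto (meson not_le)
  moreover have "mod_length R (val_ring v) R = card (value_set v (val_ring v) - value_set v R)"
    using mod_length_eq_card_value_set[OF submod_R submod_val_ring R_subset_val_ring] by simp
  ultimately show ?thesis unfolding delta_inv_def using int_closure_eq by simp
qed

lemma c_minus_delta: "c - \<delta> = int n_small"
proof -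
  have "{0..<c} = (S \<inter> {0..<c}) \<union> ({0..<c} - S)" by auto
  then have "card {0..<c} = n_small + card ({0..<c} - S)"
    unfolding n_small_def by (metis card_Un_disjoint Diff_disjoint Int_Diff_disjoint Int_commute
        finite_Diff finite_Int finite_atLeastLessThan_int)
  then show ?thesis using delta_eq_card_gaps c_nonneg by simp
qed

section \<open>The modules \<open>R : R\<^sub>i\<close> and the type sequence\<close>

lemma submod_colon: "submod R (colon R X)"
  unfolding submod_def colon_def using zero_in_R add_in_R mult_in_R
  by (auto simp: distrib_right mult.assoc)

lemma R_subset_colon: "X \<subseteq> R \<Longrightarrow> R \<subseteq> colon R X"
  unfolding colon_def using mult_in_R by blast

lemma colon_R: "colon R R = R"
  using R_subset_colon[of R] one_in_R unfolding colon_def by force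

lemma colon_antimono: "X \<subseteq> Y \<Longrightarrow> colon R Y \<subseteq> colon R X"
  unfolding colon_def by blast

lemma colon_subset_val_ring:
  assumes "\<And>x. x \<noteq> 0 \<Longrightarrow> c \<le> v x \<Longrightarrow> x \<in> X"
  shows "colon R X \<subseteq> val_ring v"
proof
  fix x assume x: "x \<in> colon R X"
  show "x \<in> val_ring v"
  proof (rule ccontr)
    assume "x \<notin> val_ring v"
    then have "x \<noteq> 0" "v x < 0" by (auto simp: val_ring_iff)
    obtain y where y: "y \<noteq> 0" "v y = c - 1 - v x" using val_surj by blast
    then have "x * y \<in> R" using x assms \<open>v x < 0\<close> unfolding colon_def by simp
    moreover have "v (x * y) = c - 1" using val_mult[OF \<open>x \<noteq> 0\<close> y(1)] y by simp
    ultimately show False using val_in_S[of "x * y"] \<open>x \<noteq> 0\<close> y c_minus_1_notin_S by simp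
  qed
qed

lemma val_ideal_subset_R: "val_ideal R v i \<subseteq> R"
  unfolding val_ideal_def by blast

lemma val_ideal_antimono: "i \<le> j \<Longrightarrow> val_ideal R v j \<subseteq> val_ideal R v i"
  unfolding val_ideal_def using s_le_iff[of i j] by auto

lemma val_ideal_0: "val_ideal R v 0 = R"
  unfolding val_ideal_def using val_nonneg by auto

lemma val_ideal_1: "val_ideal R v 1 = maxideal R"
  unfolding val_ideal_def maxideal_eq s_one using multiplicity val_in_S by force

lemma mem_val_ideal: "a \<in> R \<Longrightarrow> s i \<le> v a \<Longrightarrow> a \<in> val_ideal R v i"
  unfolding val_ideal_def by simp

lemma mem_val_ideal_Suc: "a \<in> R \<Longrightarrow> a \<noteq> 0 \<Longrightarrow> s i < v a \<Longrightarrow> a \<in> val_ideal R v (Suc i)"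
  using s_Suc_le[of "v a" i] val_in_S unfolding val_ideal_def by simp

abbreviation "A i \<equiv> colon R (val_ideal R v i)"

lemma A_mono: "i \<le> j \<Longrightarrow> A i \<subseteq> A j"
  by (rule colon_antimono[OF val_ideal_antimono])

lemma R_subset_A: "R \<subseteq> A i"
  by (rule R_subset_colon[OF val_ideal_subset_R])

lemma A_0: "A 0 = R"
  using val_ideal_0 colon_R by simp

lemma mem_A_if_val_ge:
  assumes "x \<noteq> 0" "c \<le> v x + s i"
  shows "x \<in> A i"
  unfolding colon_def
proof (intro CollectI ballI)
  fix y assume "y \<in> val_ideal R v i"
  then have "y = 0 \<or> s i \<le> v y" unfolding val_ideal_def by blast
  then show "x * y \<in> R"
    using in_R_if_val_ge_c[of "x * y"] val_mult[of x y] assms zero_in_R by (cases "y = 0") auto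
qed

lemma A_subset_val_ring: "i \<le> n_small \<Longrightarrow> A i \<subseteq> val_ring v"
  by (rule colon_subset_val_ring)
    (use in_R_if_val_ge_c s_le_c in \<open>force simp: val_ideal_def\<close>)

lemma A_n_small: "A n_small = val_ring v"
proof
  show "val_ring v \<subseteq> A n_small"
  proof
    fix x assume "x \<in> val_ring v"
    then show "x \<in> A n_small"
      using mem_A_if_val_ge[of x n_small] s_n_small R_subset_A zero_in_R by (auto simp: val_ring_iff)
  qed
qed (rule A_subset_val_ring[OF order_refl])

lemma r_seq_eq_card:
  assumes "1 \<le> i" "i \<le> n_small"
  shows "r_seq i = int (card (value_set v (A i) - value_set v (A (i - 1))))"
  using mod_length_eq_card_value_set[OF submod_colon submod_colon A_mono A_subset_val_ring R_subset_A] assms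
  unfolding type_seq_term_def by simp

lemma card_value_set_A_eq_sum:
  assumes "i \<le> n_small"
  shows "card (value_set v (A i) - S) = (\<Sum>j=1..i. card (value_set v (A j) - value_set v (A (j - 1))))"
proof -
  have "value_set v (A j) \<subseteq> value_set v (A (Suc j))" for j
    using value_set_mono[OF A_mono] by simp
  moreover have "finite (value_set v (A i) - value_set v (A 0))"
    using finite_value_set_Diff[OF A_subset_val_ring[OF assms] R_subset_A] .
  ultimately show ?thesis
    using sum_card_Diff_telescope[of i "\<lambda>j. value_set v (A j)"] A_0 S_eq_value_set by simp
qed

lemma sum_r_seq_eq_delta: "(\<Sum>i=1..n_small. r_seq i) = \<delta>"
proof -
  have "value_set v (A n_small) - S = {0..<c} - S"
    unfolding A_n_small value_set_val_ring using ge_c_in_S by auto (meson not_le)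
  then have "\<delta> = int (\<Sum>i=1..n_small. card (value_set v (A i) - value_set v (A (i - 1))))"
    using card_value_set_A_eq_sum[OF order_refl] delta_eq_card_gaps by simp
  also have "\<dots> = (\<Sum>i=1..n_small. r_seq i)"
    by (simp add: r_seq_eq_card)
  finally show ?thesis by simp
qed


lemma exists_val_eq_s: "\<exists>u\<in>R. u \<noteq> 0 \<and> v u = s i"
  using s_in_S[of i] unfolding in_S_iff by blast

lemma reduce_into_next_val_ideal:
  assumes u: "u \<in> R" "u \<noteq> 0" "v u = s i" and y: "y \<in> val_ideal R v i"
  shows "\<exists>a\<in>R. y - a * u \<in> val_ideal R v (Suc i)"
proof (cases "y = 0 \<or> s i < v y")
  case True
  then have "y \<in> val_ideal R v (Suc i)"
    using y mem_val_ideal_Suc[of y i] zero_in_R val_ideal_subset_R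
    by (auto simp: val_ideal_def)
  then show ?thesis using zero_in_R by force
next
  case False
  then have "y \<noteq> 0" "v y = v u" using y u(3) unfolding val_ideal_def by auto
  then obtain a where a: "a \<in> R" "y - a * u = 0 \<or> v u < v (y - a * u)"
    using approx_by_R_multiple[OF _ u(2)] by blast
  have "y - a * u \<in> R" using y a(1) u(1) val_ideal_subset_R diff_in_R mult_in_R by blast
  then have "y - a * u \<in> val_ideal R v (Suc i)"
    using a(2) u(3) mem_val_ideal_Suc[of "y - a * u" i] by (auto simp: val_ideal_def)
  then show ?thesis using a(1) by blast
qed

text \<open>For \<open>v u = s\<^sub>i\<close>, multiplication by \<open>u\<close> induces an embedding \<open>A\<^sub>i\<^sub>+\<^sub>1 / A\<^sub>i \<rightarrow> A\<^sub>1 / R\<close>: injective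
  by the next lemma, into \<open>A\<^sub>1\<close> by \<open>mult_plus_R_A_subset_A_1\<close>. This is why \<open>r\<^sub>i\<^sub>+\<^sub>1 \<le> r\<close>.\<close>
lemma mem_A_if_mult_in_R:
  assumes u: "u \<in> R" "u \<noteq> 0" "v u = s i" and x: "x \<in> A (Suc i)" and "u * x \<in> R"
  shows "x \<in> A i"
  unfolding colon_def
proof (intro CollectI ballI)
  fix y assume "y \<in> val_ideal R v i"
  then obtain a where a: "a \<in> R" "y - a * u \<in> val_ideal R v (Suc i)"
    using reduce_into_next_val_ideal[OF u] by blast
  have "x * (y - a * u) \<in> R" using x a(2) unfolding colon_def by blast
  moreover have "a * (u * x) \<in> R" using mult_in_R a(1) \<open>u * x \<in> R\<close> by blast
  moreover have "x * y = x * (y - a * u) + a * (u * x)" by (simp add: algebra_simps)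
  ultimately show "x * y \<in> R" using add_in_R by simp
qed

definition mult_plus_R :: "'k \<Rightarrow> 'k set \<Rightarrow> 'k set" where
  "mult_plus_R u X = {u * x + a | x a. x \<in> X \<and> a \<in> R}"

lemma mult_mem_mult_plus_R: "x \<in> X \<Longrightarrow> u * x \<in> mult_plus_R u X"
  unfolding mult_plus_R_def using zero_in_R by force

lemma mult_plus_R_A_subset_A_1:
  assumes u: "u \<in> R" "u \<noteq> 0" "v u = s i"
  shows "mult_plus_R u (A (Suc i)) \<subseteq> A 1"
proof
  fix p assume "p \<in> mult_plus_R u (A (Suc i))"
  then obtain x a where xa: "p = u * x + a" "x \<in> A (Suc i)" "a \<in> R" unfolding mult_plus_R_def by blast
  have "p * z \<in> R" if "z \<in> val_ideal R v 1" for z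
  proof -
    have z: "z \<in> R" "z = 0 \<or> 0 < v z" using that val_ideal_1 maxideal_eq by auto
    then have "u * z \<in> val_ideal R v (Suc i)"
      using u mem_val_ideal_Suc[of "u * z" i] val_mult[of u z] mult_in_R zero_in_R
      by (cases "z = 0") (auto simp: val_ideal_def)
    then have "x * (u * z) \<in> R" using xa(2) unfolding colon_def by blast
    moreover have "p * z = x * (u * z) + a * z" using xa(1) by (simp add: algebra_simps)
    ultimately show ?thesis using add_in_R mult_in_R xa(3) z(1) by simp
  qed
  then show "p \<in> A 1" unfolding colon_def by blast
qed

lemma mult_plus_R_A_eq_R:
  assumes "u \<in> R" "v u = s i"
  shows "mult_plus_R u (A i) = R"
proof
  show "mult_plus_R u (A i) \<subseteq> R"
  proof
    fix p assume "p \<in> mult_plus_R u (A i)"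
    then obtain x a where xa: "p = u * x + a" "x \<in> A i" "a \<in> R" unfolding mult_plus_R_def by blast
    have "u \<in> val_ideal R v i" using assms mem_val_ideal[of u i] by simp
    then have "x * u \<in> R" using xa(2) unfolding colon_def by blast
    then show "p \<in> R" using xa add_in_R by (simp add: mult.commute)
  qed
  show "R \<subseteq> mult_plus_R u (A i)"
    unfolding mult_plus_R_def using submod_zero[OF submod_colon] by force
qed

lemma submod_mult_plus_R: "submod R X \<Longrightarrow> submod R (mult_plus_R u X)"
  unfolding submod_def mult_plus_R_def
proof (intro conjI ballI)
  assume X: "0 \<in> X \<and> (\<forall>x\<in>X. \<forall>y\<in>X. x + y \<in> X) \<and> (\<forall>a\<in>R. \<forall>x\<in>X. a * x \<in> X)"
  show "0 \<in> {u * x + a | x a. x \<in> X \<and> a \<in> R}" using X zero_in_R by force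
  fix p q assume "p \<in> {u * x + a | x a. x \<in> X \<and> a \<in> R}" "q \<in> {u * x + a | x a. x \<in> X \<and> a \<in> R}"
  then obtain x1 a1 x2 a2 where "p = u * x1 + a1" "x1 \<in> X" "a1 \<in> R" "q = u * x2 + a2" "x2 \<in> X" "a2 \<in> R"
    by blast
  moreover have "u * x1 + a1 + (u * x2 + a2) = u * (x1 + x2) + (a1 + a2)" by (simp add: algebra_simps)
  ultimately show "p + q \<in> {u * x + a | x a. x \<in> X \<and> a \<in> R}" using X add_in_R by blast
next
  assume X: "0 \<in> X \<and> (\<forall>x\<in>X. \<forall>y\<in>X. x + y \<in> X) \<and> (\<forall>a\<in>R. \<forall>x\<in>X. a * x \<in> X)"
  fix b p assume "b \<in> R" "p \<in> {u * x + a | x a. x \<in> X \<and> a \<in> R}"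
  then obtain x a where "p = u * x + a" "x \<in> X" "a \<in> R" by blast
  moreover have "b * (u * x + a) = u * (b * x) + b * a" by (simp add: algebra_simps)
  ultimately show "b * p \<in> {u * x + a | x a. x \<in> X \<and> a \<in> R}" using X \<open>b \<in> R\<close> mult_in_R by blast
qed

lemma mult_plus_R_strict_mono:
  assumes u: "u \<in> R" "u \<noteq> 0" "v u = s i"
    and X: "submod R X" "A i \<subseteq> X" and "X \<subset> Y" "Y \<subseteq> A (Suc i)"
  shows "mult_plus_R u X \<subset> mult_plus_R u Y"
proof -
  obtain y where y: "y \<in> Y" "y \<notin> X" using \<open>X \<subset> Y\<close> by blast
  have "u * y \<notin> mult_plus_R u X"
  proof
    assume "u * y \<in> mult_plus_R u X"
    then obtain x a where xa: "u * y = u * x + a" "x \<in> X" "a \<in> R" unfolding mult_plus_R_def by blast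
    have "y - x \<in> A (Suc i)" using submod_diff[OF submod_colon] y(1) xa(2) assms(6,7) by blast
    moreover have "u * (y - x) \<in> R" using xa by (simp add: algebra_simps)
    ultimately have "y - x \<in> X" using mem_A_if_mult_in_R[OF u] X(2) by blast
    then have "(y - x) + x \<in> X" using submod_add[OF X(1)] xa(2) by blast
    then show False using y(2) by simp
  qed
  moreover have "u * y \<in> mult_plus_R u Y" using mult_mem_mult_plus_R y(1) .
  moreover have "mult_plus_R u X \<subseteq> mult_plus_R u Y"
    using \<open>X \<subset> Y\<close> unfolding mult_plus_R_def by blast
  ultimately show ?thesis by blast
qed

lemma card_new_values_A_le:
  assumes i: "Suc i \<le> n_small" and u: "u \<in> R" "u \<noteq> 0" "v u = s i"
  shows "card (value_set v (A (Suc i)) - value_set v (A i))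
           \<le> card (value_set v (mult_plus_R u (A (Suc i))) - S)"
proof -
  let ?k = "card (value_set v (A (Suc i)) - value_set v (A i))"
  have "A i \<subseteq> A (Suc i)" by (rule A_mono) simp
  then obtain C where C: "submod_chain R (A i) (A (Suc i)) ?k C"
    using submod_chain_exists[OF submod_colon R_subset_A submod_colon _ A_subset_val_ring[OF i]]
    by blast
  have "submod_chain R R (mult_plus_R u (A (Suc i))) ?k (\<lambda>j. mult_plus_R u (C j))"
    unfolding submod_chain_def
  proof (intro conjI allI impI)
    show "mult_plus_R u (C 0) = R" "mult_plus_R u (C ?k) = mult_plus_R u (A (Suc i))"
      using C mult_plus_R_A_eq_R[OF u(1,3)] unfolding submod_chain_def by simp_all
    show "submod R (mult_plus_R u (C j))" if "j \<le> ?k" for j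
      using C that submod_mult_plus_R unfolding submod_chain_def by blast
    show "mult_plus_R u (C j) \<subset> mult_plus_R u (C (Suc j))" if "j < ?k" for j
      using mult_plus_R_strict_mono[OF u, of "C j" "C (Suc j)"] C that
        submod_chain_mono[OF C, of 0 j] submod_chain_mono[OF C, of "Suc j" ?k]
      unfolding submod_chain_def by auto
  qed
  moreover have "mult_plus_R u (A (Suc i)) \<subseteq> val_ring v"
    using mult_plus_R_A_subset_A_1[OF u] A_subset_val_ring[of 1] i by auto
  ultimately show ?thesis
    using submod_chain_length_le[OF submod_R order_refl] S_eq_value_set by metis
qed

lemma type_eq_card:
  assumes "1 \<le> n_small"
  shows "r = int (card (value_set v (A 1) - S))"
  using mod_length_eq_card_value_set[OF submod_R submod_colon R_subset_A A_subset_val_ring[OF assms]]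
  unfolding cm_type_def val_ideal_1 S_eq_value_set by simp

lemma r_seq_bounds:
  assumes "1 \<le> i" "i \<le> n_small"
  shows "1 \<le> r_seq i" and "r_seq i \<le> r"
proof -
  obtain j where j: "i = Suc j" using assms(1) by (cases i) auto
  obtain u where u: "u \<in> R" "u \<noteq> 0" "v u = s j" using exists_val_eq_s by blast
  have fin: "finite (value_set v (A (Suc j)) - value_set v (A j))"
    using finite_value_set_Diff[OF A_subset_val_ring R_subset_A] assms(2) j by blast
  obtain x where x: "x \<noteq> 0" "v x = c - 1 - s j" using val_surj by blast
  have "x \<in> A (Suc j)" using mem_A_if_val_ge[OF x(1)] x(2) s_less_Suc[of j] by simp
  moreover have "x \<notin> A j"
  proof
    assume "x \<in> A j"
    moreover have "u \<in> val_ideal R v j" using u mem_val_ideal[of u j] by simp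
    ultimately have "x * u \<in> R" unfolding colon_def by blast
    then show False
      using val_in_S[of "x * u"] val_mult[OF x(1) u(2)] x u c_minus_1_notin_S by simp
  qed
  ultimately have "A j \<noteq> A (Suc j)" by blast
  moreover have "A j \<subseteq> A (Suc j)" by (rule A_mono) simp
  moreover have "A (Suc j) \<subseteq> val_ring v" using A_subset_val_ring assms(2) j by simp
  ultimately obtain w where "w \<in> value_set v (A (Suc j)) - value_set v (A j)"
    using value_set_separates[OF submod_colon submod_colon _ _ R_subset_A] by blast
  then have "card (value_set v (A (Suc j)) - value_set v (A j)) \<noteq> 0" using fin by auto
  then have "1 \<le> card (value_set v (A (Suc j)) - value_set v (A j))" by simp
  then show "1 \<le> r_seq i" using r_seq_eq_card assms j by simp
  have "finite (value_set v (A 1) - S)"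
    using finite_value_set_Diff[OF A_subset_val_ring[of 1] order_refl] assms S_eq_value_set by simp
  then have "card (value_set v (mult_plus_R u (A (Suc j))) - S) \<le> card (value_set v (A 1) - S)"
    using value_set_mono[OF mult_plus_R_A_subset_A_1[OF u]] by (intro card_mono) auto
  then show "r_seq i \<le> r"
    using card_new_values_A_le[OF _ u] r_seq_eq_card[OF assms] type_eq_card assms j by simp
qed

lemma b_eq_sum: "b_inv R v = (\<Sum>i=1..n_small. r - r_seq i)"
  unfolding b_inv_def c_minus_delta sum_subtractf sum_r_seq_eq_delta by simp

lemma b_nonneg: "0 \<le> b_inv R v"
  unfolding b_eq_sum using r_seq_bounds(2) by (intro sum_nonneg) simp

lemma b_eq_0_iff: "b_inv R v = 0 \<longleftrightarrow> (\<forall>i\<in>{1..n_small}. r_seq i = r)"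
  unfolding b_eq_sum using r_seq_bounds(2) by (subst sum_nonneg_eq_0_iff) auto

lemma type_sequence_const_iff:
  "type_sequence R v = replicate (length (type_sequence R v)) r \<longleftrightarrow> (\<forall>i\<in>{1..n_small}. r_seq i = r)"
proof -
  have seq: "type_sequence R v = map r_seq [1..<Suc n_small]"
    unfolding type_sequence_def c_minus_delta by simp
  have "type_sequence R v = replicate (length (type_sequence R v)) r
          \<longleftrightarrow> (\<forall>y\<in>set (type_sequence R v). y = r)"
    using replicate_length_same in_set_replicate by metis
  also have "\<dots> \<longleftrightarrow> (\<forall>i\<in>{1..n_small}. r_seq i = r)"
    unfolding seq set_map set_upt atLeastLessThanSuc_atLeastAtMost by blast
  finally show ?thesis .
qed


section \<open>Type sequences and value semigroups\<close>

lemma b_eq_0_if_Gorenstein: "r = 1 \<Longrightarrow> b_inv R v = 0"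
  unfolding b_eq_0_iff using r_seq_bounds by force

lemma card_le_e_minus_1:
  assumes "W \<subseteq> {0..} - S" and "\<And>w. w \<in> W \<Longrightarrow> w + e \<in> S"
  shows "int (card W) \<le> e - 1"
proof -
  have e: "0 < e" "e \<in> S" using multiplicity by simp_all
  have multiple_in_S: "k * e \<in> S" if "0 \<le> k" for k using S_mult[OF that e(2)] .
  text \<open>Two elements of \<open>W\<close> congruent modulo \<open>e\<close> would put the larger one in \<open>S\<close>.\<close>
  have "inj_on (\<lambda>w. w mod e) W"
  proof (rule inj_onI, rule ccontr)
    fix w1 w2 assume w: "w1 \<in> W" "w2 \<in> W" "w1 mod e = w2 mod e" "w1 \<noteq> w2"
    have no_pair: "False" if xy: "x \<in> W" "y \<in> W" "x mod e = y mod e" "x < y" for x y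
    proof -
      have "e dvd y - x" using xy(3)[symmetric] by (simp add: mod_eq_dvd_iff)
      then obtain q where q: "y - x = e * q" by (elim dvdE)
      then have "0 < e * q" using xy(4) by simp
      then have "0 < q" using e(1) by (simp add: zero_less_mult_iff)
      have "y = (x + e) + (q - 1) * e" using q by (simp add: algebra_simps)
      then have "y \<in> S" using S_add assms(2)[OF xy(1)] multiple_in_S[of "q - 1"] \<open>0 < q\<close> by simp
      then show False using xy(2) assms(1) by blast
    qed
    consider "w1 < w2" | "w2 < w1" using w(4) by linarith
    then show False using no_pair w(1-3) by cases metis+
  qed
  moreover have "(\<lambda>w. w mod e) ` W \<subseteq> {1..<e}"
  proof
    fix z assume "z \<in> (\<lambda>w. w mod e) ` W"
    then obtain w where w: "w \<in> W" "z = w mod e" by blast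
    have "z \<noteq> 0"
    proof
      assume "z = 0"
      then have "w = (w div e) * e" using w(2) div_mult_mod_eq[of w e] by simp
      moreover have "0 \<le> w div e" using w(1) assms(1) e(1) by (auto simp: pos_imp_zdiv_nonneg_iff)
      ultimately show False using multiple_in_S[of "w div e"] w(1) assms(1) by auto
    qed
    moreover have "0 \<le> z" "z < e" using w e by simp_all
    ultimately show "z \<in> {1..<e}" by simp
  qed
  then have "card ((\<lambda>w. w mod e) ` W) \<le> card {1..<e}" by (intro card_mono) simp_all
  ultimately show ?thesis using e(1) by (simp add: card_image)
qed

lemma value_plus_e_in_S:
  assumes "w \<in> value_set v (A 1)"
  shows "w + e \<in> S"
proof -
  obtain x where x: "x \<in> A 1" "x \<noteq> 0" "v x = w" using assms unfolding value_set_def by blast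
  obtain y where y: "y \<in> R" "y \<noteq> 0" "v y = e" using multiplicity(1) unfolding in_S_iff by blast
  then have "y \<in> val_ideal R v 1" using mem_val_ideal s_one by simp
  then have "x * y \<in> R" using x(1) unfolding colon_def by blast
  then show ?thesis using val_in_S[of "x * y"] val_mult[OF x(2) y(2)] x y by simp
qed

lemma value_set_mult_plus_R:
  assumes "w \<in> value_set v (mult_plus_R u X)" "X \<subseteq> val_ring v" "u \<noteq> 0"
  shows "w \<in> S \<or> v u \<le> w"
proof -
  obtain x a where xa: "u * x + a \<noteq> 0" "w = v (u * x + a)" "x \<in> X" "a \<in> R"
    using assms(1) unfolding value_set_def mult_plus_R_def by blast
  have vx: "x = 0 \<or> 0 \<le> v x" using xa(3) assms(2) by (auto simp: val_ring_iff)
  consider "x = 0" | "a = 0" | "x \<noteq> 0" "a \<noteq> 0" by blast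
  then show ?thesis
  proof cases
    case 1
    then show ?thesis using xa val_in_S by simp
  next
    case 2
    then show ?thesis using xa vx assms(3) val_mult[of u x] by auto
  next
    case 3
    then have "v (u * x + a) = v (u * x) \<or> v (u * x + a) = v a \<or> v (u * x) < v (u * x + a)"
      using val_add_cases[of "u * x" a] xa(1) assms(3) by auto
    then show ?thesis using xa val_in_S[of a] vx 3 assms(3) val_mult[of u x] by auto
  qed
qed

lemma gaps_above_e_subset:
  assumes "c - e \<le> s i"
  shows "{e..<c} - S \<subseteq> value_set v (A i) - S"
proof
  fix w assume w: "w \<in> {e..<c} - S"
  obtain x where x: "x \<noteq> 0" "v x = w" using val_surj by blast
  then have "x \<in> A i" using mem_A_if_val_ge[OF x(1)] w assms by simp
  then show "w \<in> value_set v (A i) - S" using x w unfolding value_set_def by blast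
qed

lemma S_eq_multiples_if_c_eq:
  assumes c: "c = int n_small * e"
  shows "S = {k * e | k. 0 \<le> k \<and> k \<le> int n_small - 1} \<union> {m. int n_small * e \<le> m}"
proof -
  have e: "0 < e" "e \<in> S" using multiplicity by simp_all
  define T where "T = (\<lambda>k. int k * e) ` {..<n_small}"
  have "T \<subseteq> S \<inter> {0..<c}"
    unfolding T_def c using S_mult[OF _ e(2)] e(1) by auto
  moreover have "card T = n_small"
    unfolding T_def using e(1) by (subst card_image) (auto intro: inj_onI)
  ultimately have T: "T = S \<inter> {0..<c}" using card_seteq[of "S \<inter> {0..<c}" T] unfolding n_small_def by simp
  show ?thesis
  proof (intro set_eqI iffI)
    fix w assume w: "w \<in> S"
    show "w \<in> {k * e | k. 0 \<le> k \<and> k \<le> int n_small - 1} \<union> {m. int n_small * e \<le> m}"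
    proof (cases "c \<le> w")
      case False
      then have "w \<in> T" using T w S_nonneg by simp
      then show ?thesis unfolding T_def by force
    qed (use c in simp)
  next
    fix w assume "w \<in> {k * e | k. 0 \<le> k \<and> k \<le> int n_small - 1} \<union> {m. int n_small * e \<le> m}"
    then show "w \<in> S" using S_mult[OF _ e(2)] ge_c_in_S c by auto
  qed
qed

end

locale nonregular_analytically_irreducible = analytically_irreducible +
  assumes not_regular: "\<not> regular_local R"
begin

lemma c_pos: "0 < c"
proof (rule ccontr)
  assume "\<not> 0 < c"
  then have "c = 0" using c_nonneg by simp
  then have val_ring_R: "x \<in> R" if "x \<in> val_ring v" for x
    using that in_R_if_val_ge_c[of x] zero_in_R by (cases "x = 0") (auto simp: val_ring_iff)
  obtain t where t: "t \<noteq> 0" "v t = 1" using val_surj by blast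
  then have "t \<in> R" using val_ring_R by (simp add: val_ring_iff)
  have "maxideal R = {t * a | a. a \<in> R}"
  proof
    show "maxideal R \<subseteq> {t * a | a. a \<in> R}"
    proof
      fix z assume "z \<in> maxideal R"
      then have "z / t \<in> val_ring v"
        using val_divide[of z t] t unfolding maxideal_eq by (cases "z = 0") (auto simp: val_ring_iff)
      moreover have "z = t * (z / t)" using t by simp
      ultimately show "z \<in> {t * a | a. a \<in> R}" using val_ring_R by blast
    qed
    show "{t * a | a. a \<in> R} \<subseteq> maxideal R"
      unfolding maxideal_eq using \<open>t \<in> R\<close> mult_in_R val_mult[of t] t val_nonneg by fastforce
  qed
  then show False using not_regular \<open>t \<in> R\<close> unfolding regular_local_def by blast
qed

lemma n_small_pos: "1 \<le> n_small"
proof -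
  have "0 \<in> S \<inter> {0..<c}" using zero_in_S c_pos by simp
  then show ?thesis unfolding n_small_def by (metis One_nat_def Suc_leI card_gt_0_iff empty_iff finite_Int
      finite_atLeastLessThan_int)
qed

lemma e_le_c: "e \<le> c"
  using multiplicity(3)[OF c_in_S c_pos] .

lemma type_le_e_minus_1: "r \<le> e - 1"
  unfolding type_eq_card[OF n_small_pos]
  using A_subset_val_ring[OF n_small_pos] value_plus_e_in_S
  by (intro card_le_e_minus_1) (auto simp: value_set_def val_ring_iff)

lemma b_eq_0_if_arithmetic:
  assumes S: "S = {k * e | k. 0 \<le> k \<and> k \<le> p} \<union> {m. (p + 1) * e \<le> m}"
  shows "b_inv R v = 0"
proof -
  have e: "0 < e" using multiplicity by simp
  have "(p + 1) * e \<in> S" "\<forall>k::nat. (p + 1) * e + int k \<in> S" using S by auto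
  then have c_le: "c \<le> (p + 1) * e" using c_le by blast
  obtain K where K: "c = K * e"
  proof (cases "c \<in> {k * e | k. 0 \<le> k \<and> k \<le> p}")
    case False
    then have "c = (p + 1) * e" using c_in_S S c_le by auto
    then show ?thesis using that by blast
  qed (use that in blast)
  have "S \<inter> {0..<c} \<subseteq> (\<lambda>k. k * e) ` {0..<K}"
  proof
    fix w assume w: "w \<in> S \<inter> {0..<c}"
    then obtain k where k: "w = k * e" "0 \<le> k" using S c_le by force
    then have "k < K" using w K e by (simp add: mult_less_cancel_right)
    then show "w \<in> (\<lambda>k. k * e) ` {0..<K}" using k by auto
  qed
  then have "n_small \<le> card {0..<K}"
    unfolding n_small_def using card_image_le[of "{0..<K}" "\<lambda>k. k * e"] card_mono
    by (metis finite_atLeastLessThan_int finite_imageI order_trans)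
  moreover have "0 < K" using K c_pos e by (simp add: zero_less_mult_iff)
  ultimately have "int n_small \<le> K" by (simp add: le_nat_iff)
  then have "int n_small * e \<le> c" using K e by (simp add: mult_right_mono)
  then have "int n_small * r \<le> \<delta>"
    using type_le_e_minus_1 c_minus_delta mult_left_mono[OF type_le_e_minus_1, of "int n_small"]
    by (simp add: algebra_simps)
  then show ?thesis using b_nonneg c_minus_delta unfolding b_inv_def by simp
qed


lemma s_pred_n_small_less_c: "s (n_small - 1) < c"
  using s_less_iff[of "n_small - 1" n_small] s_n_small n_small_pos by simp

lemma S_below_c_le_s_pred_n_small: "w \<in> S \<Longrightarrow> w < c \<Longrightarrow> w \<le> s (n_small - 1)"
  using s_Suc_le[of w "n_small - 1"] s_n_small n_small_pos by (metis Suc_diff_1 not_le order_less_le_trans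
      less_le_trans zero_less_one)

lemma c_le_s_pred_n_small_plus_e: "c \<le> s (n_small - 1) + e"
proof -
  obtain u where u: "u \<in> R" "u \<noteq> 0" "v u = s (n_small - 1)" using exists_val_eq_s by blast
  obtain y where y: "y \<in> R" "y \<noteq> 0" "v y = e" using multiplicity(1) unfolding in_S_iff by blast
  then have y1: "y \<in> val_ideal R v 1" using mem_val_ideal s_one by simp
  have "s (n_small - 1) + e + int k \<in> S" for k
  proof -
    obtain x where x: "x \<noteq> 0" "v x = int k" using val_surj by blast
    then have "x \<in> A (Suc (n_small - 1))" using A_n_small n_small_pos by (simp add: val_ring_iff)
    then have "u * x \<in> mult_plus_R u (A (Suc (n_small - 1)))"
      by (rule mult_mem_mult_plus_R)
    then have "u * x * y \<in> R"
      using mult_plus_R_A_subset_A_1[OF u] y1 unfolding colon_def by auto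
    then show ?thesis using val_in_S[of "u * x * y"] val_mult u x y by (simp add: algebra_simps)
  qed
  then show ?thesis using c_le[of "s (n_small - 1) + e"] by (metis add.right_neutral of_nat_0)
qed

lemma value_set_mult_plus_R_val_ring:
  assumes u: "u \<in> R" "u \<noteq> 0" "v u = s j" and n: "Suc j = n_small"
  shows "value_set v (mult_plus_R u (val_ring v)) - S = {s j<..<c}"
proof
  show "value_set v (mult_plus_R u (val_ring v)) - S \<subseteq> {s j<..<c}"
  proof
    fix w assume w: "w \<in> value_set v (mult_plus_R u (val_ring v)) - S"
    then have "s j \<le> w" using value_set_mult_plus_R[of w u "val_ring v"] u by auto
    moreover have "w \<noteq> s j" using w s_in_S by auto
    moreover have "w < c" using w ge_c_in_S by (meson DiffD2 not_le)
    ultimately show "w \<in> {s j<..<c}" by simp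
  qed
  show "{s j<..<c} \<subseteq> value_set v (mult_plus_R u (val_ring v)) - S"
  proof
    fix w assume w: "w \<in> {s j<..<c}"
    obtain x where x: "x \<noteq> 0" "v x = w - s j" using val_surj by blast
    have "x \<in> val_ring v" using x w by (simp add: val_ring_iff)
    then have "u * x \<in> mult_plus_R u (val_ring v)" by (rule mult_mem_mult_plus_R)
    moreover have "u * x \<noteq> 0" "v (u * x) = w" using val_mult[OF u(2) x(1)] u x by simp_all
    ultimately have "w \<in> value_set v (mult_plus_R u (val_ring v))" using val_in_value_set by metis
    moreover have "w \<notin> S" using s_Suc_le[of w j] w s_n_small n by auto
    ultimately show "w \<in> value_set v (mult_plus_R u (val_ring v)) - S" by blast
  qed
qed

text \<open>If \<open>r\<^sub>n = r\<close>, the embedding of \<open>A\<^sub>n / A\<^sub>n\<^sub>-\<^sub>1\<close> into \<open>A\<^sub>1 / R\<close> is onto, which pins down the gaps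
  of \<open>A\<^sub>1\<close>.\<close>
lemma gaps_A_1_if_last_r_seq_eq_type:
  assumes "r_seq n_small = r"
  shows "value_set v (A 1) - S = {s (n_small - 1)<..<c}"
proof -
  define j where "j = n_small - 1"
  have n: "Suc j = n_small" using n_small_pos unfolding j_def by simp
  obtain u where u: "u \<in> R" "u \<noteq> 0" "v u = s j" using exists_val_eq_s by blast
  define D where "D = mult_plus_R u (A (Suc j))"
  have "finite (value_set v (A 1) - S)"
    using finite_value_set_Diff[OF A_subset_val_ring[OF n_small_pos] order_refl] S_eq_value_set by simp
  moreover have "value_set v D - S \<subseteq> value_set v (A 1) - S"
    using value_set_mono[OF mult_plus_R_A_subset_A_1[OF u]] unfolding D_def by blast
  moreover have "card (value_set v (A 1) - S) \<le> card (value_set v D - S)"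
  proof -
    have jn: "Suc j \<le> n_small" using n by simp
    have "r_seq (Suc j) = r" using assms n by simp
    then have "card (value_set v (A 1) - S) = card (value_set v (A (Suc j)) - value_set v (A j))"
      using r_seq_eq_card[OF _ jn] type_eq_card[OF n_small_pos] by simp
    then show ?thesis using card_new_values_A_le[OF jn u] unfolding D_def by simp
  qed
  ultimately have "value_set v D - S = value_set v (A 1) - S" using card_seteq by metis
  moreover have "D = mult_plus_R u (val_ring v)" using A_n_small n unfolding D_def by simp
  ultimately show ?thesis using value_set_mult_plus_R_val_ring[OF u n] unfolding j_def by simp
qed

lemma interval_in_S_if_gaps_A_1:
  assumes "value_set v (A 1) - S = {s (n_small - 1)<..<c}"
  shows "{c - e..s (n_small - 1)} \<subseteq> S"
proof
  fix w assume w: "w \<in> {c - e..s (n_small - 1)}"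
  obtain x where x: "x \<noteq> 0" "v x = w" using val_surj by blast
  then have "x \<in> A 1" using mem_A_if_val_ge[OF x(1), of 1] w s_one by simp
  then have "w \<in> value_set v (A 1)" using x unfolding value_set_def by blast
  show "w \<in> S"
  proof (rule ccontr)
    assume "w \<notin> S"
    then have "w \<in> {s (n_small - 1)<..<c}" using assms \<open>w \<in> value_set v (A 1)\<close> by blast
    then show False using w by simp
  qed
qed

lemma delta_eq_gaps_above_e: "\<delta> = (e - 1) + int (card ({e..<c} - S))"
proof -
  have split: "{0..<c} - S = {1..<e} \<union> ({e..<c} - S)"
  proof (intro set_eqI iffI)
    fix w assume w: "w \<in> {0..<c} - S"
    then have "w \<noteq> 0" using zero_in_S by auto
    then show "w \<in> {1..<e} \<union> ({e..<c} - S)" using w by auto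
  next
    fix w assume "w \<in> {1..<e} \<union> ({e..<c} - S)"
    then show "w \<in> {0..<c} - S" using multiplicity(2) multiplicity(3)[of w] e_le_c by auto
  qed
  have "card ({0..<c} - S) = card {1..<e} + card ({e..<c} - S)"
    unfolding split by (rule card_Un_disjoint) auto
  then show ?thesis using delta_eq_card_gaps multiplicity(2) by simp
qed

lemma count_S_below_c_if_interval:
  assumes "{c - e..s (n_small - 1)} \<subseteq> S" "c - e \<le> s (n_small - 1)"
  shows "s (card (S \<inter> {0..<c - e})) = c - e"
    and "int n_small = int (card (S \<inter> {0..<c - e})) + (s (n_small - 1) - (c - e) + 1)"
proof -
  show "s (card (S \<inter> {0..<c - e})) = c - e" using assms by (intro s_card_S_below) auto
  have "S \<inter> {0..<c} = (S \<inter> {0..<c - e}) \<union> {c - e..s (n_small - 1)}"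
    using assms(1) S_below_c_le_s_pred_n_small s_pred_n_small_less_c multiplicity(2) e_le_c by force
  then have "card (S \<inter> {0..<c}) = card (S \<inter> {0..<c - e}) + card {c - e..s (n_small - 1)}"
    by (simp add: card_Un_disjoint disjoint_iff)
  then have "n_small = card (S \<inter> {0..<c - e}) + card {c - e..s (n_small - 1)}"
    unfolding n_small_def[symmetric] .
  then show "int n_small = int (card (S \<inter> {0..<c - e})) + (s (n_small - 1) - (c - e) + 1)"
    using assms(2) by simp
qed

lemma delta_le_if_r_seq_const:
  assumes "i \<le> n_small" "c - e \<le> s i" and r_seq: "\<And>j. 1 \<le> j \<Longrightarrow> j \<le> i \<Longrightarrow> r_seq j = r"
  shows "\<delta> \<le> (e - 1) + int i * r"
proof -
  have "int (card (value_set v (A i) - S)) = (\<Sum>j=1..i. r_seq j)"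
    unfolding card_value_set_A_eq_sum[OF assms(1)] of_nat_sum
    using assms(1) by (intro sum.cong) (simp_all add: r_seq_eq_card)
  also have "\<dots> = int i * r" by (simp add: r_seq)
  finally have "int (card (value_set v (A i) - S)) = int i * r" .
  moreover have "card ({e..<c} - S) \<le> card (value_set v (A i) - S)"
    using gaps_above_e_subset[OF assms(2)] finite_value_set_Diff[OF A_subset_val_ring R_subset_A, of i 0]
      assms(1) A_0 S_eq_value_set by (intro card_mono) simp_all
  ultimately show ?thesis using delta_eq_gaps_above_e by linarith
qed

text \<open>With \<open>q = c - s\<^sub>n\<^sub>-\<^sub>1\<close>, constancy of the type sequence forces \<open>r = q - 1\<close> and
  \<open>(e - q) (q - 2) \<le> 0\<close>; the two extreme cases are \<open>r = 1\<close> and \<open>c = n e\<close>.\<close>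
lemma Gorenstein_or_arithmetic_if_b_eq_0:
  assumes "b_inv R v = 0"
  shows "r = 1 \<or> (\<exists>p. S = {k * e | k. 0 \<le> k \<and> k \<le> p} \<union> {m. (p + 1) * e \<le> m})"
proof -
  define s' where "s' = s (n_small - 1)"
  define q where "q = c - s'"
  have r_seq: "r_seq i = r" if "1 \<le> i" "i \<le> n_small" for i
    using assms that unfolding b_eq_0_iff by simp
  have gaps: "value_set v (A 1) - S = {s'<..<c}"
    unfolding s'_def using gaps_A_1_if_last_r_seq_eq_type r_seq n_small_pos by simp
  have r_q: "r = q - 1"
    using type_eq_card[OF n_small_pos] s_pred_n_small_less_c unfolding gaps q_def s'_def by simp
  have q_bounds: "2 \<le> q" "q \<le> e"
    using r_seq_bounds[of 1] r_seq[of 1] n_small_pos c_le_s_pred_n_small_plus_e r_q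
    unfolding q_def s'_def by simp_all
  have "{c - e..s'} \<subseteq> S"
    using interval_in_S_if_gaps_A_1 gaps unfolding s'_def by simp
  then obtain i where s_i: "s i = c - e" and n_eq: "int n_small = int i + (e - q + 1)"
    using count_S_below_c_if_interval q_bounds unfolding q_def s'_def by force
  have delta: "\<delta> = int n_small * r" using sum_r_seq_eq_delta r_seq by simp
  moreover have "\<delta> \<le> (e - 1) + int i * r"
    using delta_le_if_r_seq_const[of i] s_i n_eq q_bounds r_seq by simp
  ultimately have "(int n_small - int i) * r \<le> e - 1" by (simp add: left_diff_distrib)
  then have "(e - q + 1) * (q - 1) \<le> e - 1" using n_eq r_q by simp
  moreover have "(e - q + 1) * (q - 1) = (e - q) * (q - 2) + (e - 1)" by (simp add: algebra_simps)
  ultimately have "(e - q) * (q - 2) \<le> 0" by linarith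
  then have "q = 2 \<or> q = e" using q_bounds mult_pos_pos[of "e - q" "q - 2"] by linarith
  then show ?thesis
  proof
    assume "q = e"
    then have "c = int n_small + int n_small * (e - 1)" using c_minus_delta delta r_q by simp
    then have "c = int n_small * e" by (simp add: algebra_simps)
    then have "S = {k * e | k. 0 \<le> k \<and> k \<le> int n_small - 1} \<union> {m. (int n_small - 1 + 1) * e \<le> m}"
      using S_eq_multiples_if_c_eq by simp
    then show ?thesis by blast
  qed (simp add: r_q)
qed

end

theorem theorem3p1:
  fixes R :: "'k::field set" and v :: "'k \<Rightarrow> int"
  assumes "subring R"
    and "quotient_field_of R"
    and "local_ring R"
    and "noetherian R"
    and "dim_one_local R"
    and "\<not> regular_local R"
    and "discrete_valuation v"
    and "int_closure R = val_ring v"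
    and "finite_module R (int_closure R)"
    and "residually_rational R v"
  shows "(b_inv R v = 0 \<longleftrightarrow>
           (cm_type R = 1 \<or>
            (\<exists>p::int. value_semigroup R v =
               {k * multiplicity_val R v | k. 0 \<le> k \<and> k \<le> p} \<union>
               {m. (p + 1) * multiplicity_val R v \<le> m})))
       \<and> (b_inv R v = 0 \<longleftrightarrow>
           type_sequence R v = replicate (length (type_sequence R v)) (cm_type R))"
proof -
  interpret nonregular_analytically_irreducible v R
    by unfold_locales (use assms in auto)
  show ?thesis
    using Gorenstein_or_arithmetic_if_b_eq_0 b_eq_0_if_Gorenstein b_eq_0_if_arithmetic
      b_eq_0_iff type_sequence_const_iff by blast
qed

end
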